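(* Let $\eta\in(0,1]$, let $\omega(x)=\eta^{-1}$ for $x\in[0,\eta]$ and $\omega(x)=0$ for $x>\eta$, and let $\tilde\omega(x)=1-x$ for $x\in[0,1]$. Let $f,g\in C^3(\mathbb{R}_+)$ satisfy $f'(\rho)<0$, $g'(\rho)>0$, $f(\rho)>0$, $g(\rho)\ge1$ for all $\rho\ge0$, and suppose there is $M\ge0$ with $\sup_{\rho\ge0}\big(\sum_{k=0}^3|f^{(k)}(\rho)|\big)+\sup_{\rho\ge0}\big(\sum_{k=0}^3|g^{(k)}(\rho)|\big)\le M$. Consider $$\frac{\partial\rho}{\partial t}(t,x)+\frac{\partial}{\partial x}\big(\rho(t,x)v(t,x)\big)=0,\quad v(t,x)=f\Big(\int_x^{x+\eta}\omega(s-x)\rho(t,s)\,ds\Big)\,g\Big(\int_{x-1}^{x}\tilde\omega(x-s)\rho(t,s)\,ds\Big),\quad \rho(t,x+1)=\rho(t,x),$$ for $t\ge0$, $x\in\mathbb{R}$, with initial condition $\rho(0,\cdot)=\rho_0$. Let $\rho_0\in W^{2,\infty}(\mathbb{R})\cap\mathrm{Per}(\mathbb{R})$, and set $\rho^*=\int_0^1\rho_0(s)\,ds$, $\rho_{\min}=\min_{x\in[0,1]}\rho_0(x)$, $\rho_{\max}=\max_{x\in[0,1]}\rho_0(x)$, $$F_{\max}=\max\{|f'(s)|:\rho_{\min}\le s\le\min(\eta^{-1}\rho^*,\rho_{\max})\},\quad F_{\min}=\min\{|f'(s)|:\rho_{\min}\le s\le\min(\eta^{-1}\rho^*,\rho_{\max})\},$$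 $$f_{\min}=f(\min(\eta^{-1}\rho^*,\rho_{\max})),\quad g_{\max}=g\big(\tfrac12\min(2\rho^*-\rho_{\min},\rho_{\max})\big),\quad g_{\min}=g\big(\tfrac12\max(2\rho^*-\rho_{\max},\rho_{\min})\big),$$ $$G_{\min}=\min\{g'(s):\max(2\rho^*-\rho_{\max},\rho_{\min})\le2s\le\min(2\rho^*-\rho_{\min},\rho_{\max})\}.$$ Suppose $F_{\max}g_{\max}-F_{\min}g_{\min}<2\eta f_{\min}G_{\min}$. Then there exists a constant $\bar c>0$ such that the unique solution $\rho\in C^1(\mathbb{R}_+\times\mathbb{R})$ of this initial-value problem (with $\rho[t]\in W^{2,\infty}(\mathbb{R})\cap\mathrm{Per}(\mathbb{R})$ for all $t\ge0$) satisfies $$\int_0^1(\rho(t,x)-\rho^* )^2dx\le\frac{\rho_{\max}}{\rho_{\min}}\exp(-\bar ct)\int_0^1(\rho_0(x)-\rho^* )^2dx,\quad t\ge0.$$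
   Context: $\mathbb{R}_+=[0,+\infty)$. $\mathrm{Per}(\mathbb{R})$ denotes the set of continuous, positive functions $\mathbb{R}\to(0,+\infty)$ that are periodic with period $1$. $W^{2,\infty}(\mathbb{R})$ denotes the $C^1$ functions with Lipschitz derivative. For $\rho:\mathbb{R}_+\times\mathbb{R}\to\mathbb{R}$, $\rho[t]$ denotes the function $x\mapsto\rho(t,x)$. *)

theory Defs
  imports "HOL-Analysis.Analysis"
begin

definition C3_nonneg :: "(real \<Rightarrow> real) \<Rightarrow> (real \<Rightarrow> real) \<Rightarrow> (real \<Rightarrow> real) \<Rightarrow> (real \<Rightarrow> real) \<Rightarrow> bool" where
  "C3_nonneg f f1 f2 f3 \<longleftrightarrow>
     (\<forall>x\<ge>0. (f has_real_derivative f1 x) (at x within {0..}) \<and>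
             (f1 has_real_derivative f2 x) (at x within {0..}) \<and>
             (f2 has_real_derivative f3 x) (at x within {0..})) \<and>
     continuous_on {0..} f3"

definition W2inf :: "(real \<Rightarrow> real) \<Rightarrow> bool" where
  "W2inf u \<longleftrightarrow> (\<exists>u'. (\<forall>x. (u has_real_derivative u' x) (at x)) \<and>
                        (\<exists>L. \<forall>x y. \<bar>u' x - u' y\<bar> \<le> L * \<bar>x - y\<bar>))"

definition Per :: "(real \<Rightarrow> real) \<Rightarrow> bool" where
  "Per u \<longleftrightarrow> continuous_on UNIV u \<and> (\<forall>x. u x > 0) \<and> (\<forall>x. u (x + 1) = u x)"

definition C1_halfplane :: "(real \<Rightarrow> real \<Rightarrow> real) \<Rightarrow> bool" where
  "C1_halfplane \<rho> \<longleftrightarrow> (\<exists>\<rho>t \<rho>x.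
     continuous_on ({0..} \<times> UNIV) (\<lambda>(t,x). \<rho>t t x) \<and>
     continuous_on ({0..} \<times> UNIV) (\<lambda>(t,x). \<rho>x t x) \<and>
     (\<forall>t\<ge>0. \<forall>x. ((\<lambda>(s,y). \<rho> s y) has_derivative (\<lambda>(h,k). \<rho>t t x * h + \<rho>x t x * k))
                    (at (t,x) within ({0..} \<times> UNIV))))"

definition omega :: "real \<Rightarrow> real \<Rightarrow> real" where
  "omega \<eta> y = (if 0 \<le> y \<and> y \<le> \<eta> then 1 / \<eta> else 0)"

definition omega_tilde :: "real \<Rightarrow> real" where
  "omega_tilde y = 1 - y"

definition velocity :: "real \<Rightarrow> (real \<Rightarrow> real) \<Rightarrow> (real \<Rightarrow> real) \<Rightarrow> (real \<Rightarrow> real \<Rightarrow> real) \<Rightarrow> real \<Rightarrow> real \<Rightarrow> real" where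
  "velocity \<eta> f g \<rho> t x =
     f (integral {x..x+\<eta>} (\<lambda>s. omega \<eta> (s - x) * \<rho> t s)) *
     g (integral {x-1..x} (\<lambda>s. omega_tilde (x - s) * \<rho> t s))"

definition is_solution :: "real \<Rightarrow> (real \<Rightarrow> real) \<Rightarrow> (real \<Rightarrow> real) \<Rightarrow> (real \<Rightarrow> real) \<Rightarrow> (real \<Rightarrow> real \<Rightarrow> real) \<Rightarrow> bool" where
  "is_solution \<eta> f g \<rho>0 \<rho> \<longleftrightarrow>
     C1_halfplane \<rho> \<and>
     (\<forall>t\<ge>0. W2inf (\<rho> t) \<and> Per (\<rho> t)) \<and>
     (\<forall>t\<ge>0. \<forall>x. \<rho> t (x + 1) = \<rho> t x) \<and>
     \<rho> 0 = \<rho>0 \<and>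
     (\<forall>t\<ge>0. \<forall>x. \<exists>D. ((\<lambda>s. \<rho> s x) has_real_derivative D) (at t within {0..}) \<and>
                     ((\<lambda>y. \<rho> t y * velocity \<eta> f g \<rho> t y) has_real_derivative (- D)) (at x))"

end

theory Submission
  imports Defs
begin

text \<open>Maximum principle: at a spatial minimum of \<open>\<rho>(t)\<close> we have \<open>\<rho>\<^sub>x = 0\<close> and
  \<open>v\<^sub>x = f'(A) g(B) (\<rho>(x + \<eta>) - \<rho>(x)) / \<eta> + f(A) g'(B) (\<rho>(x) - \<rho>\<^sup>*) \<le> 0\<close>, where \<open>A\<close>, \<open>B\<close> are the
  look-ahead and look-behind averages, so \<open>\<rho>\<^sub>t = - \<rho> v\<^sub>x \<ge> 0\<close>; hence \<open>\<rho>\<close> stays between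
  \<open>min \<rho>\<^sub>0\<close> and \<open>max \<rho>\<^sub>0\<close>, and the mass \<open>\<rho>\<^sup>*\<close> is conserved.
  An integration by parts gives, for the relative entropy \<open>E = \<integral> \<rho> ln (\<rho> / \<rho>\<^sup>*) - \<rho> + \<rho>\<^sup>*\<close>,
  \<open>E' = - \<integral> (\<rho> - \<rho>\<^sup>*) v\<^sub>x\<close>. With \<open>p = \<rho>(x) - \<rho>\<^sup>*\<close> and \<open>q = \<rho>(x + \<eta>) - \<rho>\<^sup>*\<close> the integrand is
  \<open>- f'(A) g(B) p (q - p) / \<eta> - f(A) g'(B) p\<^sup>2\<close>; the bound \<open>2 p q \<le> p\<^sup>2 + q\<^sup>2\<close>, the periodicity
  \<open>\<integral> q\<^sup>2 = \<integral> p\<^sup>2\<close> and the hypothesis on \<open>F, f, g, G\<close> give \<open>E' \<le> - \<kappa> \<integral> p\<^sup>2\<close> with \<open>\<kappa> > 0\<close>.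
  Since the entropy density lies between \<open>p\<^sup>2 / (2 max \<rho>\<^sub>0)\<close> and \<open>p\<^sup>2 / (2 min \<rho>\<^sub>0)\<close>,
  Gronwall's inequality yields the claim with \<open>c = 2 \<kappa> min \<rho>\<^sub>0\<close>.\<close>

lemma periodic_shift_int:
  fixes r :: "real \<Rightarrow> 'a"
  assumes per: "\<And>x. r (x + 1) = r x"
  shows "r (x + of_int n) = r x"
proof (induction n rule: int_induct[where k = 0])
  case (step1 i)
  then show ?case using per[of "x + of_int i"] by (simp add: add.assoc)
next
  case (step2 i)
  then show ?case using per[of "x + of_int i - 1"] by (simp add: algebra_simps)
qed simp

lemma periodic_frac:
  fixes r :: "real \<Rightarrow> 'a"
  assumes "\<And>x. r (x + 1) = r x"
  shows "r (frac x) = r x"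
  using periodic_shift_int[where r = r, OF assms, of x "- \<lfloor>x\<rfloor>"] by (simp add: frac_def)

lemma frac_in_unit_interval: "frac x \<in> {0..1}"
  using frac_lt_1[of x] by simp

lemma continuous_periodic_Inf:
  fixes r :: "real \<Rightarrow> real"
  assumes "continuous_on UNIV r" "\<And>x. r (x + 1) = r x"
  obtains a where "Inf (r ` {0..1}) = r a" "\<And>x. r a \<le> r x"
proof -
  have "continuous_on {0..1} r" using assms(1) by (rule continuous_on_subset) simp
  then obtain a where a: "a \<in> {0..1}" "\<forall>y\<in>{0..1}. r a \<le> r y"
    using continuous_attains_inf[of "{0..1::real}" r] by auto
  have min: "r a \<le> r x" for x
  proof -
    have "r a \<le> r (frac x)" using a(2) frac_in_unit_interval by blast
    then show ?thesis using periodic_frac[where r = r, OF assms(2)] by simp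
  qed
  have "Inf (r ` {0..1}) = r a" by (rule cInf_eq_minimum) (use a in auto)
  then show ?thesis using min by (rule that)
qed

lemma continuous_periodic_Sup:
  fixes r :: "real \<Rightarrow> real"
  assumes "continuous_on UNIV r" "\<And>x. r (x + 1) = r x"
  obtains b where "Sup (r ` {0..1}) = r b" "\<And>x. r x \<le> r b"
proof -
  have "continuous_on {0..1} r" using assms(1) by (rule continuous_on_subset) simp
  then obtain b where b: "b \<in> {0..1}" "\<forall>y\<in>{0..1}. r y \<le> r b"
    using continuous_attains_sup[of "{0..1::real}" r] by auto
  have max: "r x \<le> r b" for x
  proof -
    have "r (frac x) \<le> r b" using b(2) frac_in_unit_interval by blast
    then show ?thesis using periodic_frac[where r = r, OF assms(2)] by simp
  qed
  have "Sup (r ` {0..1}) = r b" by (rule cSup_eq_maximum) (use b in auto)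
  then show ?thesis using max by (rule that)
qed

lemma Per_bounds:
  assumes "Per r"
  shows "0 < Inf (r ` {0..1})" "Inf (r ` {0..1}) \<le> r x" "r x \<le> Sup (r ` {0..1})"
proof -
  have r: "continuous_on UNIV r" "\<And>x. r (x + 1) = r x" and "\<And>x. 0 < r x"
    using assms by (auto simp: Per_def)
  obtain a where "Inf (r ` {0..1}) = r a" "\<And>x. r a \<le> r x"
    using continuous_periodic_Inf[OF r] by blast
  moreover obtain b where "Sup (r ` {0..1}) = r b" "\<And>x. r x \<le> r b"
    using continuous_periodic_Sup[OF r] by blast
  ultimately show "0 < Inf (r ` {0..1})" "Inf (r ` {0..1}) \<le> r x" "r x \<le> Sup (r ` {0..1})"
    using \<open>\<And>x. 0 < r x\<close> by simp_all
qed

lemma has_real_derivative_integral_window: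
  fixes r :: "real \<Rightarrow> real"
  assumes r: "continuous_on UNIV r" and h: "0 \<le> h"
  shows "((\<lambda>y. integral {y..y+h} r) has_real_derivative r (x + h) - r x) (at x)"
proof -
  define F where "F = (\<lambda>z. integral {x-1..z} r)"
  have F: "(F has_real_derivative r z) (at z)" if "x - 1 < z" "z < x + h + 1" for z
  proof -
    have "(F has_real_derivative r z) (at z within {x-1..x+h+1})"
      unfolding F_def using that by (intro integral_has_real_derivative continuous_on_subset[OF r]) auto
    moreover have "z \<in> interior {x-1..x+h+1}" using that by auto
    ultimately show ?thesis by (metis at_within_interior)
  qed
  have "(F has_real_derivative r (x + h)) (at (x + h))" by (rule F) (use h in auto)
  moreover have "((\<lambda>y. y + h) has_real_derivative 1) (at x)" by (auto intro!: derivative_eq_intros)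
  ultimately have "((\<lambda>y. F (y + h)) has_real_derivative r (x + h)) (at x)"
    using DERIV_chain2 by fastforce
  then have "((\<lambda>y. F (y + h) - F y) has_real_derivative r (x + h) - r x) (at x)"
    by (rule DERIV_diff) (rule F, use h in auto)
  then show ?thesis
  proof (rule has_field_derivative_transform_within_open[of _ _ _ "{x-1<..<x+1}"])
    fix y assume y: "y \<in> {x-1<..<x+1}"
    have "r integrable_on {x-1..y+h}"
      by (intro integrable_continuous_interval continuous_on_subset[OF r]) auto
    then have "integral {x-1..y} r + integral {y..y+h} r = integral {x-1..y+h} r"
      by (rule Henstock_Kurzweil_Integration.integral_combine[rotated 2]) (use y h in auto)
    then show "F (y + h) - F y = integral {y..y+h} r" by (simp add: F_def)
  qed auto
qed

lemma periodic_integral_unit_window: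
  fixes r :: "real \<Rightarrow> real"
  assumes "continuous_on UNIV r" "\<And>x. r (x + 1) = r x"
  shows "integral {a..a+1} r = integral {0..1} r"
proof -
  have "((\<lambda>y. integral {y..y+1} r) has_real_derivative 0) (at x)" for x
    using has_real_derivative_integral_window[OF assms(1), of 1 x] assms(2) by simp
  then show ?thesis using DERIV_isconst_all[of "\<lambda>y. integral {y..y+1} r" a 0] by simp
qed

lemma periodic_integral_shift:
  fixes r :: "real \<Rightarrow> real"
  assumes "continuous_on UNIV r" "\<And>x. r (x + 1) = r x"
  shows "integral {0..1} (\<lambda>x. r (x + c)) = integral {0..1} r"
  using integral_shift_real_ivl[of c c "c + 1" r] periodic_integral_unit_window[OF assms, of c]
  by simp

lemma integral_weighted_bounds:
  fixes w r :: "real \<Rightarrow> real"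
  assumes w: "(w has_integral c) S" "\<And>s. s \<in> S \<Longrightarrow> 0 \<le> w s"
    and wr: "(\<lambda>s. w s * r s) integrable_on S"
    and r: "\<And>s. s \<in> S \<Longrightarrow> m \<le> r s" "\<And>s. s \<in> S \<Longrightarrow> r s \<le> Mx"
  shows "c * m \<le> integral S (\<lambda>s. w s * r s)" "integral S (\<lambda>s. w s * r s) \<le> c * Mx"
proof -
  have wk: "((\<lambda>s. w s * k) has_integral c * k) S" for k
    using has_integral_mult_left[OF w(1)] by simp
  have "integral S (\<lambda>s. w s * m) \<le> integral S (\<lambda>s. w s * r s)"
    by (rule integral_le[OF has_integral_integrable[OF wk] wr]) (simp add: w(2) r(1) mult_left_mono)
  then show "c * m \<le> integral S (\<lambda>s. w s * r s)" using integral_unique[OF w(1)] by (simp add: mult.commute)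
  have "integral S (\<lambda>s. w s * r s) \<le> integral S (\<lambda>s. w s * Mx)"
    by (rule integral_le[OF wr has_integral_integrable[OF wk]]) (simp add: w(2) r(2) mult_left_mono)
  then show "integral S (\<lambda>s. w s * r s) \<le> c * Mx" using integral_unique[OF w(1)] by (simp add: mult.commute)
qed

definition look_ahead :: "real \<Rightarrow> (real \<Rightarrow> real) \<Rightarrow> real \<Rightarrow> real" where
  "look_ahead \<eta> r x = integral {x..x+\<eta>} (\<lambda>s. omega \<eta> (s - x) * r s)"

definition look_behind :: "(real \<Rightarrow> real) \<Rightarrow> real \<Rightarrow> real" where
  "look_behind r x = integral {x-1..x} (\<lambda>s. omega_tilde (x - s) * r s)"

lemma velocity_eq: "velocity \<eta> f g \<rho> t x = f (look_ahead \<eta> (\<rho> t) x) * g (look_behind (\<rho> t) x)"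
  by (simp add: velocity_def look_ahead_def look_behind_def)

lemma look_ahead_eq_mean:
  assumes "0 < \<eta>"
  shows "look_ahead \<eta> r x = integral {x..x+\<eta>} r / \<eta>"
proof -
  have "look_ahead \<eta> r x = integral {x..x+\<eta>} (\<lambda>s. r s / \<eta>)"
    unfolding look_ahead_def by (rule integral_cong) (simp add: omega_def)
  then show ?thesis by simp
qed

lemma has_real_derivative_look_ahead:
  assumes "0 < \<eta>" "continuous_on UNIV r"
  shows "(look_ahead \<eta> r has_real_derivative (r (x + \<eta>) - r x) / \<eta>) (at x)"
  unfolding look_ahead_eq_mean[OF assms(1), abs_def]
  using has_real_derivative_integral_window[OF assms(2), of \<eta> x] assms(1)
  by (auto intro!: derivative_eq_intros)

lemma look_ahead_periodic:
  assumes "0 < \<eta>" "\<And>x. r (x + 1) = r x"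
  shows "look_ahead \<eta> r (x + 1) = look_ahead \<eta> r x"
  using integral_shift_real_ivl[of "x + 1" 1 "x + 1 + \<eta>" r] assms
  by (simp add: look_ahead_eq_mean add_ac)

lemma look_ahead_bounds:
  assumes \<eta>: "0 < \<eta>" "\<eta> \<le> 1" and r: "continuous_on UNIV r" "\<And>x. r (x + 1) = r x"
    and lower: "\<And>y. m \<le> r y" and upper: "\<And>y. r y \<le> Mx" and "0 \<le> m"
  shows "m \<le> look_ahead \<eta> r x" "look_ahead \<eta> r x \<le> Mx"
    "look_ahead \<eta> r x \<le> integral {0..1} r / \<eta>"
proof -
  have ri: "r integrable_on {a..b}" for a b
    by (intro integrable_continuous_interval continuous_on_subset[OF r(1)]) auto
  have "((\<lambda>s. 1 / \<eta>) has_integral 1) {x..x+\<eta>}"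
    using has_integral_const_real[of "1 / \<eta>" x "x + \<eta>"] \<eta> by simp
  from integral_weighted_bounds[OF this _ integrable_on_mult_right[OF ri] lower upper] \<eta>(1)
  have "m \<le> integral {x..x+\<eta>} (\<lambda>s. 1 / \<eta> * r s)" "integral {x..x+\<eta>} (\<lambda>s. 1 / \<eta> * r s) \<le> Mx"
    by auto
  moreover have "look_ahead \<eta> r x = integral {x..x+\<eta>} (\<lambda>s. 1 / \<eta> * r s)"
    using look_ahead_eq_mean[OF \<eta>(1)] by simp
  ultimately show "m \<le> look_ahead \<eta> r x" "look_ahead \<eta> r x \<le> Mx" by simp_all
  have "integral {x..x+\<eta>} r + integral {x+\<eta>..x+1} r = integral {x..x+1} r"
    using \<eta> by (intro Henstock_Kurzweil_Integration.integral_combine ri) auto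
  moreover have "0 \<le> integral {x+\<eta>..x+1} r"
    using lower \<open>0 \<le> m\<close> by (intro integral_nonneg ri) (auto intro: order_trans)
  ultimately have "integral {x..x+\<eta>} r \<le> integral {0..1} r"
    using periodic_integral_unit_window[OF r, of x] by linarith
  then show "look_ahead \<eta> r x \<le> integral {0..1} r / \<eta>"
    using \<eta>(1) by (simp add: look_ahead_eq_mean divide_right_mono)
qed

text \<open>The weight \<open>1 - (y - s)\<close> splits as \<open>(1 - y) + s\<close>, and the first part integrates \<open>r\<close> over a
  full period, which does not depend on \<open>y\<close>.\<close>
lemma has_real_derivative_look_behind:
  assumes r: "continuous_on UNIV r" "\<And>x. r (x + 1) = r x"
  shows "(look_behind r has_real_derivative r x - integral {0..1} r) (at x)"
proof -
  define Q where "Q = (\<lambda>z. integral {z..z+1} (\<lambda>s. s * r s))"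
  have sr: "continuous_on UNIV (\<lambda>s. s * r s)" by (intro continuous_intros r(1))
  have ri: "r integrable_on {a..b}" "(\<lambda>s. s * r s) integrable_on {a..b}" for a b
    by (intro integrable_continuous_interval continuous_on_subset[OF r(1)] continuous_on_subset[OF sr],
        simp)+
  have "look_behind r y = (1 - y) * integral {0..1} r + Q (y - 1)" for y
  proof -
    have "look_behind r y = integral {y-1..y} (\<lambda>s. (1 - y) * r s + s * r s)"
      unfolding look_behind_def omega_tilde_def by (rule integral_cong) (simp add: algebra_simps)
    also have "\<dots> = (1 - y) * integral {y-1..y} r + integral {y-1..y} (\<lambda>s. s * r s)"
      by (subst integral_add) (simp_all add: integrable_on_mult_right ri)
    finally show ?thesis
      using periodic_integral_unit_window[OF r, of "y - 1"] by (simp add: Q_def)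
  qed
  then have "look_behind r = (\<lambda>y. (1 - y) * integral {0..1} r + Q (y - 1))" by blast
  moreover have "(Q has_real_derivative r x) (at (x - 1))"
    using has_real_derivative_integral_window[OF sr, of 1 "x - 1"] r(2)[of "x - 1"]
    by (simp add: Q_def algebra_simps)
  then have "((\<lambda>y. Q (y - 1)) has_real_derivative r x * 1) (at x)"
    by (rule DERIV_chain2) (auto intro!: derivative_eq_intros)
  then have "((\<lambda>y. (1 - y) * integral {0..1} r + Q (y - 1)) has_real_derivative
      r x - integral {0..1} r) (at x)"
    by (auto intro!: derivative_eq_intros)
  ultimately show ?thesis by simp
qed

lemma look_behind_periodic:
  assumes "\<And>x. r (x + 1) = r x"
  shows "look_behind r (x + 1) = look_behind r x"
  using integral_shift_real_ivl[of "x" 1 "x + 1" "\<lambda>s. omega_tilde (x + 1 - s) * r s"] assms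
  by (simp add: look_behind_def)

lemma has_integral_look_behind_weight: "((\<lambda>s. 1 - (x - s)) has_integral 1/2) {x-1..x::real}"
proof -
  have "((\<lambda>s. 1 - (x - s)) has_integral ((1-x)*x + x^2/2) - ((1-x)*(x-1) + (x-1)^2/2)) {x-1..x}"
    by (rule fundamental_theorem_of_calculus)
      (auto simp: has_real_derivative_iff_has_vector_derivative[symmetric] intro!: derivative_eq_intros)
  moreover have "((1-x)*x + x^2/2) - ((1-x)*(x-1) + (x-1)^2/2) = (1/2::real)"
    by (simp add: power2_eq_square field_simps)
  ultimately show ?thesis by simp
qed

lemma look_behind_bounds:
  assumes r: "continuous_on UNIV r" "\<And>x. r (x + 1) = r x"
    and lower: "\<And>y. m \<le> r y" and upper: "\<And>y. r y \<le> Mx"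
  shows "m \<le> 2 * look_behind r x" "2 * look_behind r x \<le> Mx"
    "2 * look_behind r x \<le> 2 * integral {0..1} r - m"
    "2 * integral {0..1} r - Mx \<le> 2 * look_behind r x"
proof -
  define S where "S = {x-1..x}"
  define w where "w s = 1 - (x - s)" for s
  have w01: "0 \<le> w s" "0 \<le> 1 - w s" if "s \<in> S" for s using that by (auto simp: w_def S_def)
  have "(w has_integral 1/2) S"
    unfolding S_def w_def by (rule has_integral_look_behind_weight)
  moreover have "((\<lambda>s. 1 - w s) has_integral 1/2) S"
  proof -
    have "((\<lambda>s. 1) has_integral 1) S" using has_integral_const_real[of 1 "x-1" x] by (simp add: S_def)
    from has_integral_diff[OF this \<open>(w has_integral 1/2) S\<close>] show ?thesis by simp
  qed
  moreover have wi: "(\<lambda>s. w s * r s) integrable_on S" "(\<lambda>s. (1 - w s) * r s) integrable_on S"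
    unfolding S_def w_def by (auto intro!: integrable_continuous_interval continuous_intros
        continuous_on_subset[OF r(1)])
  ultimately have
    "m \<le> 2 * integral S (\<lambda>s. w s * r s)" "2 * integral S (\<lambda>s. w s * r s) \<le> Mx"
    "m \<le> 2 * integral S (\<lambda>s. (1 - w s) * r s)" "2 * integral S (\<lambda>s. (1 - w s) * r s) \<le> Mx"
    using integral_weighted_bounds[of w "1/2" S r m Mx] w01 lower upper
      integral_weighted_bounds[of "\<lambda>s. 1 - w s" "1/2" S r m Mx] by auto
  moreover have "look_behind r x = integral S (\<lambda>s. w s * r s)"
    by (simp add: look_behind_def omega_tilde_def w_def S_def)
  moreover have "integral S (\<lambda>s. w s * r s) + integral S (\<lambda>s. (1 - w s) * r s) = integral {0..1} r"
    using integral_add[OF wi] periodic_integral_unit_window[OF r, of "x - 1"]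
    by (simp add: S_def algebra_simps)
  ultimately show "m \<le> 2 * look_behind r x" "2 * look_behind r x \<le> Mx"
    "2 * look_behind r x \<le> 2 * integral {0..1} r - m"
    "2 * integral {0..1} r - Mx \<le> 2 * look_behind r x" by linarith+
qed

lemma at_within_atLeast_0: "0 < t \<Longrightarrow> at t within {0..} = at (t::real)"
  by (rule at_within_interior) simp

lemma nonneg_derivative_imp_increasing_on_nonneg:
  fixes g g' :: "real \<Rightarrow> real"
  assumes g: "\<And>y. 0 \<le> y \<Longrightarrow> (g has_real_derivative g' y) (at y within {0..})"
    and g': "\<And>y. 0 \<le> y \<Longrightarrow> 0 \<le> g' y" and "0 \<le> a" "a \<le> b"
  shows "g a \<le> g b"
proof (rule DERIV_nonneg_imp_increasing_open[OF \<open>a \<le> b\<close>])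
  fix y assume "a < y" "y < b"
  then show "\<exists>z. (g has_real_derivative z) (at y) \<and> 0 \<le> z"
    using g[of y] g'[of y] \<open>0 \<le> a\<close> at_within_atLeast_0[of y] by auto
next
  show "continuous_on {a..b} g"
    using \<open>0 \<le> a\<close> by (intro DERIV_continuous_on[of _ _ g'] DERIV_subset[OF g]) auto
qed

lemma has_derivative_partials:
  fixes \<rho> :: "real \<Rightarrow> real \<Rightarrow> real"
  assumes d: "((\<lambda>(s, y). \<rho> s y) has_derivative (\<lambda>(h, k). a * h + b * k)) (at (t, x) within S \<times> UNIV)"
    and "t \<in> S"
  shows "((\<lambda>s. \<rho> s x) has_real_derivative a) (at t within S)"
    "(\<rho> t has_real_derivative b) (at x)"
proof -
  have "((\<lambda>s. (s, x)) has_derivative (\<lambda>h. (h, 0))) (at t within S)"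
    by (auto intro!: derivative_eq_intros)
  moreover have "((\<lambda>(s, y). \<rho> s y) has_derivative (\<lambda>(h, k). a * h + b * k))
      (at ((\<lambda>s. (s, x)) t) within (\<lambda>s. (s, x)) ` S)"
    using d by (rule has_derivative_subset) auto
  ultimately have "((\<lambda>s. \<rho> s x) has_derivative (\<lambda>h. a * h)) (at t within S)"
    using has_derivative_in_compose by fastforce
  then show "((\<lambda>s. \<rho> s x) has_real_derivative a) (at t within S)"
    by (simp add: has_field_derivative_def mult_commute_abs)
  have "((\<lambda>y. (t, y)) has_derivative (\<lambda>k. (0, k))) (at x)"
    by (auto intro!: derivative_eq_intros)
  moreover have "((\<lambda>(s, y). \<rho> s y) has_derivative (\<lambda>(h, k). a * h + b * k))
      (at ((\<lambda>y. (t, y)) x) within range (\<lambda>y. (t, y)))"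
    by (rule has_derivative_subset[OF d]) (use \<open>t \<in> S\<close> in auto)
  ultimately have "(\<rho> t has_derivative (\<lambda>k. b * k)) (at x)"
    using has_derivative_in_compose[where s = UNIV] by fastforce
  then show "(\<rho> t has_real_derivative b) (at x)"
    by (simp add: has_field_derivative_def mult_commute_abs)
qed

lemma C1_halfplane_partials:
  assumes "C1_halfplane \<rho>"
  obtains \<rho>_t \<rho>_x where "continuous_on ({0..} \<times> UNIV) (\<lambda>(t, x). \<rho> t x)"
    "continuous_on ({0..} \<times> UNIV) (\<lambda>(t, x). \<rho>_t t x)"
    "\<And>t x. 0 \<le> t \<Longrightarrow> ((\<lambda>s. \<rho> s x) has_real_derivative \<rho>_t t x) (at t within {0..})"
    "\<And>t x. 0 \<le> t \<Longrightarrow> (\<rho> t has_real_derivative \<rho>_x t x) (at x)"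
proof -
  obtain \<rho>_t \<rho>_x where cont_t: "continuous_on ({0..} \<times> UNIV) (\<lambda>(t, x). \<rho>_t t x)"
    and "\<forall>t\<ge>0. \<forall>x. ((\<lambda>(s, y). \<rho> s y) has_derivative (\<lambda>(h, k). \<rho>_t t x * h + \<rho>_x t x * k))
      (at (t, x) within {0..} \<times> UNIV)"
    using assms unfolding C1_halfplane_def by blast
  then have D: "((\<lambda>(s, y). \<rho> s y) has_derivative (\<lambda>(h, k). \<rho>_t t x * h + \<rho>_x t x * k))
      (at (t, x) within {0..} \<times> UNIV)" if "0 \<le> t" for t x
    using that by blast
  have "continuous (at p within {0..} \<times> UNIV) (\<lambda>(t, x). \<rho> t x)" if p: "p \<in> {0..} \<times> UNIV" for p
  proof -
    obtain t x where "p = (t, x)" "0 \<le> t" using p by auto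
    then show ?thesis using has_derivative_continuous[OF D[OF \<open>0 \<le> t\<close>, of x]] by simp
  qed
  then have cont: "continuous_on ({0..} \<times> UNIV) (\<lambda>(t, x). \<rho> t x)"
    by (simp add: continuous_on_eq_continuous_within)
  have "((\<lambda>s. \<rho> s x) has_real_derivative \<rho>_t t x) (at t within {0..})"
    and "(\<rho> t has_real_derivative \<rho>_x t x) (at x)" if "0 \<le> t" for t x
    using has_derivative_partials[OF D[OF that]] that by auto
  with cont cont_t show ?thesis by (rule that)
qed

definition rel_entropy :: "real \<Rightarrow> real \<Rightarrow> real" where
  "rel_entropy c y = y * ln (y / c) - y + c"

lemma has_real_derivative_rel_entropy:
  assumes "0 < c" "0 < y"
  shows "(rel_entropy c has_real_derivative ln (y / c)) (at y)"
  unfolding rel_entropy_def[abs_def] using assms by (auto intro!: derivative_eq_intros)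

lemma rel_entropy_Lagrange:
  assumes "0 < c" "0 < y"
  obtains \<xi> where "min y c \<le> \<xi>" "\<xi> \<le> max y c" "rel_entropy c y = (y - c)\<^sup>2 / (2 * \<xi>)"
proof (cases "y = c")
  case True
  then show ?thesis using that[of c] by (simp add: rel_entropy_def)
next
  case False
  define D where "D n = (if n = 0 then rel_entropy c else if n = 1 then (\<lambda>s. ln (s / c)) else inverse)"
    for n :: nat
  have D0: "D 0 = rel_entropy c" by (simp add: D_def)
  have derivs: "\<forall>n s. n < 2 \<and> min y c \<le> s \<and> s \<le> max y c \<longrightarrow> (D n has_real_derivative D (Suc n) s) (at s)"
  proof (intro allI impI)
    fix n :: nat and s :: real assume ns: "n < 2 \<and> min y c \<le> s \<and> s \<le> max y c"
    then have "0 < s" using assms by linarith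
    from ns consider "n = 0" | "n = 1" by linarith
    then show "(D n has_real_derivative D (Suc n) s) (at s)"
    proof cases
      case 1
      then show ?thesis using has_real_derivative_rel_entropy[OF assms(1) \<open>0 < s\<close>] by (simp add: D_def)
    next
      case 2
      have "((\<lambda>s. ln (s / c)) has_real_derivative inverse s) (at s)"
        using \<open>0 < s\<close> assms(1) by (auto intro!: derivative_eq_intros simp: field_simps)
      with 2 show ?thesis by (simp add: D_def)
    qed
  qed
  have "\<exists>\<xi>. (if y < c then y < \<xi> \<and> \<xi> < c else c < \<xi> \<and> \<xi> < y) \<and>
      rel_entropy c y = (\<Sum>n<2. D n c / fact n * (y - c) ^ n) + D 2 \<xi> / fact 2 * (y - c) ^ 2"
    by (rule Taylor[OF _ D0 derivs]) (use False in auto)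
  then obtain \<xi> where \<xi>: "if y < c then y < \<xi> \<and> \<xi> < c else c < \<xi> \<and> \<xi> < y"
    and eq: "rel_entropy c y = (\<Sum>n<2. D n c / fact n * (y - c) ^ n) + D 2 \<xi> / fact 2 * (y - c) ^ 2"
    by blast
  have "(\<Sum>n<2. D n c / fact n * (y - c) ^ n) = 0"
    using assms(1) by (simp add: numeral_2_eq_2 D_def rel_entropy_def)
  moreover have "D 2 \<xi> / fact 2 * (y - c) ^ 2 = (y - c)\<^sup>2 / (2 * \<xi>)"
    by (simp add: D_def inverse_eq_divide)
  ultimately have "rel_entropy c y = (y - c)\<^sup>2 / (2 * \<xi>)" using eq by simp
  moreover have "min y c \<le> \<xi>" "\<xi> \<le> max y c" using \<xi> by (auto split: if_splits)
  ultimately show ?thesis using that by blast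
qed

lemma rel_entropy_quadratic_bounds:
  assumes "0 < a" "a \<le> y" "y \<le> b" "a \<le> c" "c \<le> b"
  shows "(y - c)\<^sup>2 / (2 * b) \<le> rel_entropy c y" "rel_entropy c y \<le> (y - c)\<^sup>2 / (2 * a)"
proof -
  obtain \<xi> where \<xi>: "min y c \<le> \<xi>" "\<xi> \<le> max y c" and eq: "rel_entropy c y = (y - c)\<^sup>2 / (2 * \<xi>)"
    using rel_entropy_Lagrange[of c y] assms by auto
  have "a \<le> \<xi>" "\<xi> \<le> b" using \<xi> assms by auto
  then show "(y - c)\<^sup>2 / (2 * b) \<le> rel_entropy c y" "rel_entropy c y \<le> (y - c)\<^sup>2 / (2 * a)"
    unfolding eq using \<open>0 < a\<close> by (auto intro!: frac_le)
qed

lemma integral_rel_entropy_bounds: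
  fixes r :: "real \<Rightarrow> real"
  assumes r: "continuous_on {u..v} r" "\<And>x. x \<in> {u..v} \<Longrightarrow> a \<le> r x \<and> r x \<le> b"
    and "0 < a" "a \<le> c" "c \<le> b"
  shows "integral {u..v} (\<lambda>x. (r x - c)\<^sup>2) \<le> 2 * b * integral {u..v} (\<lambda>x. rel_entropy c (r x))"
    "2 * a * integral {u..v} (\<lambda>x. rel_entropy c (r x)) \<le> integral {u..v} (\<lambda>x. (r x - c)\<^sup>2)"
proof -
  have "r x / c \<noteq> 0" if "x \<in> {u..v}" for x using r(2)[OF that] assms(3-) by auto
  then have ent: "(\<lambda>x. rel_entropy c (r x)) integrable_on {u..v}"
    unfolding rel_entropy_def by (intro integrable_continuous_interval continuous_intros r(1)) auto
  have sq: "(\<lambda>x. (r x - c)\<^sup>2) integrable_on {u..v}"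
    by (intro integrable_continuous_interval continuous_intros r(1))
  have pw: "(r x - c)\<^sup>2 \<le> 2 * b * rel_entropy c (r x)" "2 * a * rel_entropy c (r x) \<le> (r x - c)\<^sup>2"
    if "x \<in> {u..v}" for x
    using rel_entropy_quadratic_bounds[of a "r x" b c] r(2)[OF that] assms(3-)
    by (simp_all add: field_simps)
  show "integral {u..v} (\<lambda>x. (r x - c)\<^sup>2) \<le> 2 * b * integral {u..v} (\<lambda>x. rel_entropy c (r x))"
    using integral_le[OF sq integrable_on_mult_right[OF ent, of "2 * b"]] pw(1) by simp
  show "2 * a * integral {u..v} (\<lambda>x. rel_entropy c (r x)) \<le> integral {u..v} (\<lambda>x. (r x - c)\<^sup>2)"
    using integral_le[OF integrable_on_mult_right[OF ent, of "2 * a"] sq] pw(2) by simp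
qed

lemma exp_decay_from_differential_inequality:
  fixes E :: "real \<Rightarrow> real"
  assumes "0 \<le> t" "continuous_on {0..t} E"
    and E': "\<And>s. 0 < s \<Longrightarrow> s < t \<Longrightarrow> \<exists>D. (E has_real_derivative D) (at s) \<and> D \<le> - c * E s"
  shows "E t \<le> E 0 * exp (- c * t)"
proof -
  define H where "H s = E s * exp (c * s)" for s
  have "H t \<le> H 0"
  proof (rule DERIV_nonpos_imp_decreasing_open[OF assms(1)])
    fix s assume "0 < s" "s < t"
    then obtain D where D: "(E has_real_derivative D) (at s)" "D \<le> - c * E s" using E' by blast
    have "(H has_real_derivative (D + c * E s) * exp (c * s)) (at s)"
      unfolding H_def[abs_def] using D(1) by (auto intro!: derivative_eq_intros simp: algebra_simps)
    moreover have "(D + c * E s) * exp (c * s) \<le> 0" using D(2) by (simp add: mult_nonpos_nonneg)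
    ultimately show "\<exists>y. (H has_real_derivative y) (at s) \<and> y \<le> 0" by blast
  next
    show "continuous_on {0..t} H" unfolding H_def[abs_def] by (intro continuous_intros assms(2))
  qed
  have "E t = H t * exp (- c * t)" by (simp add: H_def mult.assoc flip: exp_add)
  also have "\<dots> \<le> H 0 * exp (- c * t)" using \<open>H t \<le> H 0\<close> by simp
  finally show ?thesis by (simp add: H_def)
qed

lemma first_hitting_time:
  fixes w :: "real \<Rightarrow> real \<Rightarrow> real"
  assumes cont: "continuous_on ({0..} \<times> UNIV) (\<lambda>(t, x). w t x)"
    and per: "\<And>t x. 0 \<le> t \<Longrightarrow> w t (x + 1) = w t x"
    and init: "\<And>x. m < w 0 x" and hit: "0 \<le> t1" "w t1 x1 \<le> m"
  obtains T x0 where "0 < T" "w T x0 \<le> m" "\<And>t y. 0 \<le> t \<Longrightarrow> t < T \<Longrightarrow> m < w t y"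
proof -
  define S where "S = {0..t1} \<times> {0..1::real}"
  define K where "K = S \<inter> (\<lambda>p. w (fst p) (snd p)) -` {..m}"
  have "continuous_on S (\<lambda>(t, x). w t x)"
    by (rule continuous_on_subset[OF cont]) (auto simp: S_def)
  then have "continuous_on S (\<lambda>p. w (fst p) (snd p))" by (simp add: case_prod_beta')
  then have "closed K"
    unfolding K_def S_def by (intro continuous_closed_preimage closed_Times) auto
  moreover have "bounded K" unfolding K_def S_def
    by (rule bounded_subset[OF compact_imp_bounded[OF compact_Times[OF compact_Icc compact_Icc]]]) auto
  ultimately have "compact K" by (simp add: compact_eq_bounded_closed)
  moreover have "(t1, frac x1) \<in> K"
    using hit periodic_frac[where r = "w t1", OF per] frac_in_unit_interval by (auto simp: K_def S_def)
  ultimately obtain p where p: "p \<in> K" and first: "\<And>q. q \<in> K \<Longrightarrow> fst p \<le> fst q"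
    using continuous_attains_inf[of K fst] continuous_on_fst[OF continuous_on_id] by blast
  show ?thesis
  proof (rule that[of "fst p" "snd p"])
    show "w (fst p) (snd p) \<le> m" using p by (simp add: K_def)
    then show "0 < fst p" using p init[of "snd p"] by (cases "fst p = 0") (auto simp: K_def S_def)
  next
    fix t y assume t: "0 \<le> t" "t < fst p"
    then have "(t, frac y) \<notin> K" using first by fastforce
    moreover have "t \<le> t1" using t p by (auto simp: K_def S_def)
    ultimately show "m < w t y"
      using t periodic_frac[where r = "w t", OF per] frac_in_unit_interval by (auto simp: K_def S_def)
  qed
qed

text \<open>If the bound failed, \<open>u + \<epsilon> (1 + t)\<close> would reach the level \<open>m\<close> at a first time \<open>T > 0\<close>, at a
  spatial minimum; there its time derivative is at least \<open>\<epsilon> > 0\<close>, so it was below \<open>m\<close> just before \<open>T\<close>.\<close>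
lemma periodic_min_principle:
  fixes u u_t :: "real \<Rightarrow> real \<Rightarrow> real"
  assumes cont: "continuous_on ({0..} \<times> UNIV) (\<lambda>(t, x). u t x)"
    and per: "\<And>t x. 0 \<le> t \<Longrightarrow> u t (x + 1) = u t x"
    and deriv: "\<And>t x. 0 < t \<Longrightarrow> ((\<lambda>s. u s x) has_real_derivative u_t t x) (at t)"
    and at_min: "\<And>t x. 0 < t \<Longrightarrow> (\<And>y. u t x \<le> u t y) \<Longrightarrow> 0 \<le> u_t t x"
    and init: "\<And>x. m \<le> u 0 x" and "0 \<le> t1"
  shows "m \<le> u t1 x1"
proof (rule ccontr)
  assume "\<not> m \<le> u t1 x1"
  define \<epsilon> where "\<epsilon> = (m - u t1 x1) / (2 * (1 + t1))"
  define w where "w t x = u t x + \<epsilon> * (1 + t)" for t x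
  have "0 < \<epsilon>" using \<open>\<not> m \<le> u t1 x1\<close> \<open>0 \<le> t1\<close> by (simp add: \<epsilon>_def)
  have "w t1 x1 = (u t1 x1 + m) / 2" using \<open>0 \<le> t1\<close> by (simp add: w_def \<epsilon>_def field_simps)
  then have "w t1 x1 \<le> m" using \<open>\<not> m \<le> u t1 x1\<close> by simp
  moreover have "continuous_on ({0..} \<times> UNIV) (\<lambda>(t, x). w t x)"
    using cont unfolding w_def case_prod_beta' by (intro continuous_intros)
  moreover have "w t (x + 1) = w t x" if "0 \<le> t" for t x using per[OF that] by (simp add: w_def)
  moreover have "m < w 0 x" for x using init[of x] \<open>0 < \<epsilon>\<close> by (simp add: w_def)
  ultimately obtain T x0 where T: "0 < T" "w T x0 \<le> m"
    and before: "\<And>t y. 0 \<le> t \<Longrightarrow> t < T \<Longrightarrow> m < w t y"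
    using first_hitting_time[of w m t1 x1] \<open>0 \<le> t1\<close> by blast
  have w_deriv: "((\<lambda>s. w s y) has_real_derivative u_t T y + \<epsilon>) (at T)" for y
    unfolding w_def using deriv[OF T(1)] by (auto intro!: derivative_eq_intros)
  have above: "m \<le> w T y" for y
  proof (rule tendsto_lowerbound)
    show "((\<lambda>s. w s y) \<longlongrightarrow> w T y) (at_left T)"
      using DERIV_isCont[OF w_deriv] by (simp add: isCont_def filterlim_at_split)
    show "\<forall>\<^sub>F s in at_left T. m \<le> w s y"
      using eventually_at_left_real[OF T(1)] by eventually_elim (auto intro: less_imp_le before)
  qed simp
  have "u T x0 \<le> u T y" for y using above[of y] T(2) by (simp add: w_def)
  then have "0 < u_t T x0 + \<epsilon>" using at_min[OF T(1)] \<open>0 < \<epsilon>\<close> by fastforce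
  then obtain d where "0 < d" and left: "\<And>h. 0 < h \<Longrightarrow> h < d \<Longrightarrow> w (T - h) x0 < w T x0"
    using DERIV_pos_inc_left[OF w_deriv] by blast
  then have "w (T - min d T / 2) x0 < w T x0" using T(1) by simp
  moreover have "m < w (T - min d T / 2) x0" using T(1) \<open>0 < d\<close> by (intro before) auto
  ultimately show False using T(2) by simp
qed

lemma mixed_term_bound:
  fixes a b p q \<eta> :: real
  assumes "0 < \<eta>" "0 \<le> a" "amin \<le> a" "a \<le> amax" "bmin \<le> b"
  shows "a * p * (q - p) / \<eta> - b * p\<^sup>2 \<le> (amax * q\<^sup>2 - amin * p\<^sup>2) / (2 * \<eta>) - bmin * p\<^sup>2"
proof -
  have "a * (2 * (p * q)) \<le> a * (p\<^sup>2 + q\<^sup>2)"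
    using sum_squares_bound[of p q] \<open>0 \<le> a\<close> by (intro mult_left_mono) simp_all
  then have "2 * (a * p * (q - p)) \<le> a * q\<^sup>2 - a * p\<^sup>2" by (simp add: algebra_simps power2_eq_square)
  also have "\<dots> \<le> amax * q\<^sup>2 - amin * p\<^sup>2"
    using assms(3,4) by (intro diff_mono mult_right_mono) simp_all
  finally have "a * p * (q - p) / \<eta> \<le> (amax * q\<^sup>2 - amin * p\<^sup>2) / 2 / \<eta>"
    using \<open>0 < \<eta>\<close> by (intro divide_right_mono) auto
  then have "a * p * (q - p) / \<eta> \<le> (amax * q\<^sup>2 - amin * p\<^sup>2) / (2 * \<eta>)"
    by (simp add: divide_divide_eq_left)
  moreover have "bmin * p\<^sup>2 \<le> b * p\<^sup>2" using assms(5) by (simp add: mult_right_mono)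
  ultimately show ?thesis by linarith
qed

locale traffic_model =
  fixes \<eta> :: real and f f' g g' :: "real \<Rightarrow> real"
  assumes eta_pos: "0 < \<eta>" and eta_le_1: "\<eta> \<le> 1"
    and f_deriv: "\<And>y. 0 \<le> y \<Longrightarrow> (f has_real_derivative f' y) (at y within {0..})"
    and g_deriv: "\<And>y. 0 \<le> y \<Longrightarrow> (g has_real_derivative g' y) (at y within {0..})"
    and f_pos: "\<And>y. 0 \<le> y \<Longrightarrow> 0 < f y" and f'_neg: "\<And>y. 0 \<le> y \<Longrightarrow> f' y < 0"
    and g_ge_1: "\<And>y. 0 \<le> y \<Longrightarrow> 1 \<le> g y" and g'_pos: "\<And>y. 0 \<le> y \<Longrightarrow> 0 < g' y"
begin

lemma f_antimono:
  assumes "0 \<le> a" "a \<le> b"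
  shows "f b \<le> f a"
proof -
  have "- f a \<le> - f b"
    using nonneg_derivative_imp_increasing_on_nonneg[of "\<lambda>y. - f y" "\<lambda>y. - f' y" a b]
      f_deriv f'_neg assms by (auto intro: DERIV_minus less_imp_le)
  then show ?thesis by simp
qed

lemma g_mono: "0 \<le> a \<Longrightarrow> a \<le> b \<Longrightarrow> g a \<le> g b"
  using nonneg_derivative_imp_increasing_on_nonneg[of g g' a b] g_deriv g'_pos
  by (auto intro: less_imp_le)

lemma coefficient_bounds:
  assumes bdd: "bdd_above ((\<lambda>s. \<bar>f' s\<bar>) ` {ylo..yhi})"
    and y: "0 \<le> ylo" "ylo \<le> y" "y \<le> yhi" and z: "0 \<le> zlo" "zlo \<le> z" "z \<le> zhi"
  shows "Inf ((\<lambda>s. \<bar>f' s\<bar>) ` {ylo..yhi}) * g zlo \<le> - f' y * g z"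
    "- f' y * g z \<le> Sup ((\<lambda>s. \<bar>f' s\<bar>) ` {ylo..yhi}) * g zhi"
    "f yhi * Inf (g' ` {zlo..zhi}) \<le> f y * g' z"
proof -
  have f'y: "\<bar>f' y\<bar> = - f' y" using f'_neg[of y] y by simp
  have Inf_f': "Inf ((\<lambda>s. \<bar>f' s\<bar>) ` {ylo..yhi}) \<le> - f' y"
    unfolding f'y[symmetric] by (rule cInf_lower) (use y in \<open>auto intro: bdd_belowI[of _ 0]\<close>)
  have Sup_f': "- f' y \<le> Sup ((\<lambda>s. \<bar>f' s\<bar>) ` {ylo..yhi})"
    unfolding f'y[symmetric] by (rule cSup_upper[OF _ bdd]) (use y in auto)
  have g'_nonneg: "0 \<le> g' s" if "s \<in> {zlo..zhi}" for s
    using that z g'_pos[of s] by simp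
  have Inf_g': "Inf (g' ` {zlo..zhi}) \<le> g' z"
    by (rule cInf_lower) (use z g'_nonneg in \<open>auto intro: bdd_belowI[of _ 0]\<close>)
  have "0 \<le> Inf (g' ` {zlo..zhi})"
    by (rule cInf_greatest) (use z g'_nonneg in auto)
  moreover have "g zlo \<le> g z" "g z \<le> g zhi" "f yhi \<le> f y" "1 \<le> g zlo" "1 \<le> g z" "0 < f y"
    "0 < - f' y"
    using g_mono f_antimono g_ge_1 f_pos f'_neg y z by auto
  ultimately show "Inf ((\<lambda>s. \<bar>f' s\<bar>) ` {ylo..yhi}) * g zlo \<le> - f' y * g z"
    "- f' y * g z \<le> Sup ((\<lambda>s. \<bar>f' s\<bar>) ` {ylo..yhi}) * g zhi"
    "f yhi * Inf (g' ` {zlo..zhi}) \<le> f y * g' z"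
    by (intro mult_mono; use Inf_f' Sup_f' Inf_g' in linarith)+
qed

text \<open>For a periodic density with values in \<open>[rmin, rmax]\<close> and mean \<open>M\<close>, \<open>y\<close> ranges over the
  possible values of the look-ahead mean and \<open>z\<close> over those of the look-behind average.\<close>
definition velocity_coefficients_bounded :: "real \<Rightarrow> real \<Rightarrow> real \<Rightarrow> real \<Rightarrow> real \<Rightarrow> real \<Rightarrow> bool" where
  "velocity_coefficients_bounded rmin rmax M amin amax bmin \<longleftrightarrow>
     (\<forall>y z. rmin \<le> y \<and> y \<le> min (M / \<eta>) rmax \<and>
       max (2 * M - rmax) rmin \<le> 2 * z \<and> 2 * z \<le> min (2 * M - rmin) rmax \<longrightarrow>
       amin \<le> - f' y * g z \<and> - f' y * g z \<le> amax \<and> bmin \<le> f y * g' z)"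

lemma velocity_coefficients_bounded_by_extrema:
  assumes "0 < rmin" and bdd: "bdd_above ((\<lambda>s. \<bar>f' s\<bar>) ` {rmin .. min (M / \<eta>) rmax})"
  shows "velocity_coefficients_bounded rmin rmax M
    (Inf ((\<lambda>s. \<bar>f' s\<bar>) ` {rmin .. min (M / \<eta>) rmax}) * g (max (2 * M - rmax) rmin / 2))
    (Sup ((\<lambda>s. \<bar>f' s\<bar>) ` {rmin .. min (M / \<eta>) rmax}) * g (min (2 * M - rmin) rmax / 2))
    (f (min (M / \<eta>) rmax)
      * Inf (g' ` {s. max (2 * M - rmax) rmin \<le> 2 * s \<and> 2 * s \<le> min (2 * M - rmin) rmax}))"
  unfolding velocity_coefficients_bounded_def
proof (intro allI impI, elim conjE)
  fix y z assume y: "rmin \<le> y" "y \<le> min (M / \<eta>) rmax"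
    and z: "max (2 * M - rmax) rmin \<le> 2 * z" "2 * z \<le> min (2 * M - rmin) rmax"
  define zlo where "zlo = max (2 * M - rmax) rmin / 2"
  define zhi where "zhi = min (2 * M - rmin) rmax / 2"
  have Z: "{s. max (2 * M - rmax) rmin \<le> 2 * s \<and> 2 * s \<le> min (2 * M - rmin) rmax} = {zlo..zhi}"
    by (auto simp: zlo_def zhi_def)
  have "0 \<le> rmin" "0 \<le> zlo" "zlo \<le> z" "z \<le> zhi" using \<open>0 < rmin\<close> z by (simp_all add: zlo_def zhi_def)
  from coefficient_bounds[OF bdd this(1) y this(2-4)]
  show "Inf ((\<lambda>s. \<bar>f' s\<bar>) ` {rmin .. min (M / \<eta>) rmax}) * g (max (2 * M - rmax) rmin / 2) \<le> - f' y * g z \<and>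
    - f' y * g z \<le> Sup ((\<lambda>s. \<bar>f' s\<bar>) ` {rmin .. min (M / \<eta>) rmax}) * g (min (2 * M - rmin) rmax / 2) \<and>
    f (min (M / \<eta>) rmax) * Inf (g' ` {s. max (2 * M - rmax) rmin \<le> 2 * s \<and> 2 * s \<le> min (2 * M - rmin) rmax})
      \<le> f y * g' z"
    unfolding Z zlo_def[symmetric] zhi_def[symmetric] by blast
qed

end

locale traffic_solution = traffic_model +
  fixes \<rho> \<rho>_t \<rho>_x :: "real \<Rightarrow> real \<Rightarrow> real"
  assumes rho_cont: "continuous_on ({0..} \<times> UNIV) (\<lambda>(t, x). \<rho> t x)"
    and rho_t_cont: "continuous_on ({0..} \<times> UNIV) (\<lambda>(t, x). \<rho>_t t x)"
    and rho_t: "\<And>t x. 0 \<le> t \<Longrightarrow> ((\<lambda>s. \<rho> s x) has_real_derivative \<rho>_t t x) (at t within {0..})"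
    and rho_x: "\<And>t x. 0 \<le> t \<Longrightarrow> (\<rho> t has_real_derivative \<rho>_x t x) (at x)"
    and rho_pos: "\<And>t x. 0 \<le> t \<Longrightarrow> 0 < \<rho> t x"
    and rho_periodic: "\<And>t x. 0 \<le> t \<Longrightarrow> \<rho> t (x + 1) = \<rho> t x"
    and conservation: "\<And>t x. 0 < t \<Longrightarrow>
      ((\<lambda>y. \<rho> t y * velocity \<eta> f g \<rho> t y) has_real_derivative - \<rho>_t t x) (at x)"
begin

definition mass :: "real \<Rightarrow> real" where
  "mass t = integral {0..1} (\<rho> t)"

definition velocity_x :: "real \<Rightarrow> real \<Rightarrow> real" where
  "velocity_x t x =
     f' (look_ahead \<eta> (\<rho> t) x) * ((\<rho> t (x + \<eta>) - \<rho> t x) / \<eta>) * g (look_behind (\<rho> t) x)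
     + f (look_ahead \<eta> (\<rho> t) x) * g' (look_behind (\<rho> t) x) * (\<rho> t x - mass t)"

lemma rho_continuous: "0 \<le> t \<Longrightarrow> continuous_on UNIV (\<rho> t)"
  using rho_x by (intro DERIV_continuous_on) (auto intro: has_field_derivative_at_within)

lemma rho_t_continuous:
  assumes "0 \<le> t"
  shows "continuous_on UNIV (\<rho>_t t)"
proof -
  have "continuous_on UNIV (\<lambda>x. (\<lambda>(t, x). \<rho>_t t x) (t, x))"
    by (rule continuous_on_compose2[OF rho_t_cont]) (use assms in \<open>auto intro!: continuous_intros\<close>)
  then show ?thesis by simp
qed

lemma rho_integrable: "0 \<le> t \<Longrightarrow> \<rho> t integrable_on {a..b}"
  by (intro integrable_continuous_interval continuous_on_subset[OF rho_continuous]) auto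

lemma rho_t_at: "0 < t \<Longrightarrow> ((\<lambda>s. \<rho> s x) has_real_derivative \<rho>_t t x) (at t)"
  using rho_t[of t x] at_within_atLeast_0[of t] by simp

lemma mass_lower_bound:
  assumes "0 \<le> t" "\<And>y. m \<le> \<rho> t y"
  shows "m \<le> mass t"
proof -
  have "integral {0..1} (\<lambda>_::real. m) \<le> integral {0..1} (\<rho> t)"
    using assms by (intro Henstock_Kurzweil_Integration.integral_le rho_integrable) auto
  then show ?thesis by (simp add: mass_def)
qed

lemma mass_upper_bound:
  assumes "0 \<le> t" "\<And>y. \<rho> t y \<le> Mx"
  shows "mass t \<le> Mx"
proof -
  have "integral {0..1} (\<rho> t) \<le> integral {0..1} (\<lambda>_::real. Mx)"
    using assms by (intro Henstock_Kurzweil_Integration.integral_le rho_integrable) auto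
  then show ?thesis by (simp add: mass_def)
qed

lemma look_ahead_behind_pos:
  assumes "0 \<le> t"
  shows "0 < look_ahead \<eta> (\<rho> t) x" "0 < look_behind (\<rho> t) x"
proof -
  note r = rho_continuous[OF assms] rho_periodic[OF assms]
  obtain a where a: "\<And>y. \<rho> t a \<le> \<rho> t y" using continuous_periodic_Inf[OF r] by blast
  obtain b where b: "\<And>y. \<rho> t y \<le> \<rho> t b" using continuous_periodic_Sup[OF r] by blast
  have "0 < \<rho> t a" by (rule rho_pos[OF assms])
  moreover have "\<rho> t a \<le> look_ahead \<eta> (\<rho> t) x" "\<rho> t a \<le> 2 * look_behind (\<rho> t) x"
    using look_ahead_bounds(1)[OF eta_pos eta_le_1 r a b] look_behind_bounds(1)[OF r a b]
      \<open>0 < \<rho> t a\<close> by simp_all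
  ultimately show "0 < look_ahead \<eta> (\<rho> t) x" "0 < look_behind (\<rho> t) x" by linarith+
qed

lemma has_real_derivative_velocity:
  assumes "0 \<le> t"
  shows "(velocity \<eta> f g \<rho> t has_real_derivative velocity_x t x) (at x)"
proof -
  note r = rho_continuous[OF assms] rho_periodic[OF assms]
  let ?A = "look_ahead \<eta> (\<rho> t)" and ?B = "look_behind (\<rho> t)"
  have "(f has_real_derivative f' (?A x)) (at (?A x))" "(g has_real_derivative g' (?B x)) (at (?B x))"
    using f_deriv[of "?A x"] g_deriv[of "?B x"] look_ahead_behind_pos[OF assms, of x] at_within_atLeast_0 by auto
  from DERIV_mult[OF DERIV_chain2[OF this(1) has_real_derivative_look_ahead[OF eta_pos r(1)]]
      DERIV_chain2[OF this(2) has_real_derivative_look_behind[OF r]]]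
  have "((\<lambda>y. f (?A y) * g (?B y)) has_real_derivative velocity_x t x) (at x)"
    by (simp add: velocity_x_def mass_def algebra_simps)
  then show ?thesis by (simp add: velocity_eq[abs_def])
qed

lemma velocity_periodic: "0 \<le> t \<Longrightarrow> velocity \<eta> f g \<rho> t (x + 1) = velocity \<eta> f g \<rho> t x"
  by (simp add: velocity_eq look_ahead_periodic[OF eta_pos] look_behind_periodic rho_periodic)

lemma rho_t_eq:
  assumes "0 < t"
  shows "\<rho>_t t x = - (\<rho>_x t x * velocity \<eta> f g \<rho> t x + \<rho> t x * velocity_x t x)"
proof -
  have "((\<lambda>y. \<rho> t y * velocity \<eta> f g \<rho> t y) has_real_derivative
      \<rho> t x * velocity_x t x + \<rho>_x t x * velocity \<eta> f g \<rho> t x) (at x)"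
    using assms by (intro DERIV_mult' rho_x has_real_derivative_velocity) auto
  from DERIV_unique[OF conservation[OF assms] this] show ?thesis by simp
qed

lemma integral_rho_t_eq_0:
  assumes "0 < t"
  shows "integral {0..1} (\<rho>_t t) = 0"
proof -
  define P where "P y = \<rho> t y * velocity \<eta> f g \<rho> t y" for y
  have "((\<lambda>y. - \<rho>_t t y) has_integral P 1 - P 0) {0..1}"
  proof (rule fundamental_theorem_of_calculus)
    fix y :: real
    have "(P has_real_derivative - \<rho>_t t y) (at y)"
      unfolding P_def[abs_def] by (rule conservation[OF assms])
    then show "(P has_vector_derivative - \<rho>_t t y) (at y within {0..1})"
      by (simp add: has_real_derivative_iff_has_vector_derivative[symmetric] has_field_derivative_at_within)
  qed simp
  moreover have "P 1 = P 0"
    using rho_periodic[of t 0] velocity_periodic[of t 0] assms by (simp add: P_def)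
  ultimately have "((\<lambda>y. - \<rho>_t t y) has_integral 0) {0..1}" by simp
  from has_integral_neg[OF this] show ?thesis by (simp add: integral_unique)
qed

lemma has_real_derivative_mass:
  assumes "0 \<le> t"
  shows "(mass has_real_derivative integral {0..1} (\<rho>_t t)) (at t within {0..})"
proof -
  have "((\<lambda>t. integral (cbox 0 1) (\<rho> t)) has_real_derivative integral (cbox 0 1) (\<rho>_t t))
      (at t within {0..})"
  proof (rule leibniz_rule_field_derivative)
    show "continuous_on ({0..} \<times> cbox 0 1) (\<lambda>(s, x). \<rho>_t s x)"
      by (rule continuous_on_subset[OF rho_t_cont]) auto
  qed (use assms rho_t rho_integrable in auto)
  then show ?thesis by (simp add: mass_def[abs_def])
qed

lemma mass_const:
  assumes "0 \<le> t"
  shows "mass t = mass 0"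
proof (cases "t = 0")
  case False
  show ?thesis
  proof (rule DERIV_isconst_end[of 0 t mass])
    show "0 < t" using assms False by simp
    show "continuous_on {0..t} mass"
      by (rule DERIV_continuous_on, rule DERIV_subset[OF has_real_derivative_mass]) auto
    fix s :: real assume "0 < s" "s < t"
    then show "(mass has_real_derivative 0) (at s)"
      using has_real_derivative_mass[of s] integral_rho_t_eq_0[of s] at_within_atLeast_0[of s] by simp
  qed
qed simp

lemma velocity_x_decomposition:
  assumes "0 \<le> t"
  obtains a b where "0 \<le> a" "0 \<le> b"
    "velocity_x t x = b * (\<rho> t x - mass t) - a * (\<rho> t (x + \<eta>) - \<rho> t x)"
proof -
  define A where "A = look_ahead \<eta> (\<rho> t) x"
  define B where "B = look_behind (\<rho> t) x"
  have "0 < - f' A" "0 < g B" "0 < f A" "0 < g' B"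
    using look_ahead_behind_pos[OF assms, of x] f'_neg[of A] g_ge_1[of B] f_pos[of A] g'_pos[of B]
    by (auto simp: A_def B_def)
  then have "0 \<le> - f' A * g B / \<eta>" "0 \<le> f A * g' B"
    using eta_pos by (intro divide_nonneg_pos mult_nonneg_nonneg; linarith)+
  moreover have "velocity_x t x = f A * g' B * (\<rho> t x - mass t) - (- f' A * g B / \<eta>) * (\<rho> t (x + \<eta>) - \<rho> t x)"
    using eta_pos by (simp add: velocity_x_def A_def B_def field_simps)
  ultimately show ?thesis by (rule that)
qed

lemma rho_t_nonneg_at_min:
  assumes "0 < t" and min: "\<And>y. \<rho> t x \<le> \<rho> t y"
  shows "0 \<le> \<rho>_t t x"
proof -
  have t: "0 \<le> t" using assms by simp
  obtain a b where "0 \<le> a" "0 \<le> b"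
    and v: "velocity_x t x = b * (\<rho> t x - mass t) - a * (\<rho> t (x + \<eta>) - \<rho> t x)"
    using velocity_x_decomposition[OF t] .
  have "b * (\<rho> t x - mass t) \<le> 0"
    using \<open>0 \<le> b\<close> mass_lower_bound[OF t min] by (simp add: mult_nonneg_nonpos)
  moreover have "0 \<le> a * (\<rho> t (x + \<eta>) - \<rho> t x)" using \<open>0 \<le> a\<close> min by simp
  ultimately have "velocity_x t x \<le> 0" unfolding v by linarith
  moreover have "\<rho>_x t x = 0" by (rule DERIV_local_min[OF rho_x[OF t], of 1]) (use min in auto)
  ultimately show ?thesis using rho_t_eq[OF assms(1), of x] rho_pos[OF t, of x]
    by (simp add: mult_nonneg_nonpos)
qed

lemma rho_t_nonpos_at_max:
  assumes "0 < t" and max: "\<And>y. \<rho> t y \<le> \<rho> t x"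
  shows "\<rho>_t t x \<le> 0"
proof -
  have t: "0 \<le> t" using assms by simp
  obtain a b where "0 \<le> a" "0 \<le> b"
    and v: "velocity_x t x = b * (\<rho> t x - mass t) - a * (\<rho> t (x + \<eta>) - \<rho> t x)"
    using velocity_x_decomposition[OF t] .
  have "0 \<le> b * (\<rho> t x - mass t)" using \<open>0 \<le> b\<close> mass_upper_bound[OF t max] by simp
  moreover have "a * (\<rho> t (x + \<eta>) - \<rho> t x) \<le> 0"
    using \<open>0 \<le> a\<close> max by (simp add: mult_nonneg_nonpos)
  ultimately have "0 \<le> velocity_x t x" unfolding v by linarith
  moreover have "\<rho>_x t x = 0" by (rule DERIV_local_max[OF rho_x[OF t], of 1]) (use max in auto)
  ultimately show ?thesis using rho_t_eq[OF assms(1), of x] rho_pos[OF t, of x] by simp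
qed

lemma rho_lower_bound: "(\<And>x. m \<le> \<rho> 0 x) \<Longrightarrow> 0 \<le> t \<Longrightarrow> m \<le> \<rho> t x"
  by (rule periodic_min_principle[of \<rho> \<rho>_t, OF rho_cont rho_periodic rho_t_at rho_t_nonneg_at_min])

lemma rho_upper_bound:
  assumes "\<And>x. \<rho> 0 x \<le> Mx" "0 \<le> t"
  shows "\<rho> t x \<le> Mx"
proof -
  have "- Mx \<le> - \<rho> t x"
  proof (rule periodic_min_principle[of "\<lambda>t x. - \<rho> t x" "\<lambda>t x. - \<rho>_t t x"])
    show "continuous_on ({0..} \<times> UNIV) (\<lambda>(t, x). - \<rho> t x)"
      using continuous_on_minus[OF rho_cont] by (simp add: case_prod_beta')
    show "- \<rho> t (x + 1) = - \<rho> t x" if "0 \<le> t" for t x using rho_periodic[OF that] by simp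
    show "((\<lambda>s. - \<rho> s x) has_real_derivative - \<rho>_t t x) (at t)" if "0 < t" for t x
      by (rule DERIV_minus[OF rho_t_at[OF that]])
    show "0 \<le> - \<rho>_t t x" if "0 < t" "\<And>y. - \<rho> t x \<le> - \<rho> t y" for t x
      using rho_t_nonpos_at_max[of t x] that by simp
  qed (use assms in simp_all)
  then show ?thesis by simp
qed

definition entropy :: "real \<Rightarrow> real \<Rightarrow> real" where
  "entropy c t = integral {0..1} (\<lambda>x. rel_entropy c (\<rho> t x))"

lemma has_real_derivative_entropy:
  assumes "0 < c" "0 \<le> t"
  shows "(entropy c has_real_derivative integral {0..1} (\<lambda>x. ln (\<rho> t x / c) * \<rho>_t t x))
    (at t within {0..})"
proof -
  have "((\<lambda>t. integral (cbox 0 1) (\<lambda>x. rel_entropy c (\<rho> t x))) has_real_derivative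
      integral (cbox 0 1) (\<lambda>x. ln (\<rho> t x / c) * \<rho>_t t x)) (at t within {0..})"
  proof (rule leibniz_rule_field_derivative)
    fix s x :: real assume "s \<in> {0..}"
    then show "((\<lambda>s. rel_entropy c (\<rho> s x)) has_real_derivative ln (\<rho> s x / c) * \<rho>_t s x)
        (at s within {0..})"
      using DERIV_chain2[OF has_real_derivative_rel_entropy[OF assms(1) rho_pos] rho_t] by simp
  next
    fix s :: real assume "s \<in> {0..}"
    then have "\<rho> s x / c \<noteq> 0" for x using assms(1) rho_pos[of s x] by simp
    with \<open>s \<in> {0..}\<close> show "(\<lambda>x. rel_entropy c (\<rho> s x)) integrable_on cbox 0 1"
      unfolding rel_entropy_def
      by (auto intro!: integrable_continuous_interval continuous_intros
          continuous_on_subset[OF rho_continuous])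
  next
    have "\<rho> s x \<noteq> 0" if "0 \<le> s" for s x using rho_pos[OF that, of x] by simp
    then have "continuous_on ({0..} \<times> cbox 0 1) (\<lambda>p. ln (\<rho> (fst p) (snd p) / c) * \<rho>_t (fst p) (snd p))"
      using assms(1) by (intro continuous_intros continuous_on_subset[OF rho_cont[unfolded case_prod_beta']]
          continuous_on_subset[OF rho_t_cont[unfolded case_prod_beta']]) auto
    then show "continuous_on ({0..} \<times> cbox 0 1) (\<lambda>(s, x). ln (\<rho> s x / c) * \<rho>_t s x)"
      by (simp add: case_prod_beta')
  qed (use assms in auto)
  then show ?thesis by (simp add: entropy_def[abs_def])
qed

text \<open>A periodic primitive of the entropy production: it yields
  \<open>\<integral> ln (\<rho> / c) \<rho>\<^sub>t = - \<integral> (\<rho> - c) v\<^sub>x\<close> over a period.\<close>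
lemma has_real_derivative_entropy_flux:
  assumes "0 < c" "0 < t"
  shows "((\<lambda>y. ln (\<rho> t y / c) * (\<rho> t y * velocity \<eta> f g \<rho> t y) - (\<rho> t y - c) * velocity \<eta> f g \<rho> t y)
    has_real_derivative - (ln (\<rho> t y / c) * \<rho>_t t y) - (\<rho> t y - c) * velocity_x t y) (at y)"
proof -
  have t: "0 \<le> t" using assms by simp
  let ?v = "velocity \<eta> f g \<rho> t"
  have "((\<lambda>y. ln (\<rho> t y / c)) has_real_derivative (\<rho>_x t y / c) / (\<rho> t y / c)) (at y)"
    using rho_pos[OF t, of y] assms(1) by (auto intro!: derivative_eq_intros rho_x[OF t])
  moreover have "((\<lambda>y. \<rho> t y - c) has_real_derivative \<rho>_x t y) (at y)"
    using DERIV_diff[OF rho_x[OF t] DERIV_const[of c]] by simp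
  ultimately have "((\<lambda>y. ln (\<rho> t y / c) * (\<rho> t y * ?v y) - (\<rho> t y - c) * ?v y) has_real_derivative
      ln (\<rho> t y / c) * (- \<rho>_t t y) + (\<rho>_x t y / c) / (\<rho> t y / c) * (\<rho> t y * ?v y)
      - ((\<rho> t y - c) * velocity_x t y + \<rho>_x t y * ?v y)) (at y)"
    by (intro DERIV_diff DERIV_mult' conservation[OF assms(2)] has_real_derivative_velocity[OF t])
  moreover have "(\<rho>_x t y / c) / (\<rho> t y / c) * (\<rho> t y * ?v y) = \<rho>_x t y * ?v y"
    using rho_pos[OF t, of y] assms(1) by (simp add: field_simps)
  ultimately show ?thesis by (simp add: algebra_simps)
qed

lemma integral_log_rho_t:
  assumes "0 < c" "0 < t"
  shows "(\<lambda>x. (\<rho> t x - c) * velocity_x t x) integrable_on {0..1}"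
    "integral {0..1} (\<lambda>x. ln (\<rho> t x / c) * \<rho>_t t x)
       = - integral {0..1} (\<lambda>x. (\<rho> t x - c) * velocity_x t x)"
proof -
  have t: "0 \<le> t" using assms by simp
  define G where "G y = ln (\<rho> t y / c) * (\<rho> t y * velocity \<eta> f g \<rho> t y)
    - (\<rho> t y - c) * velocity \<eta> f g \<rho> t y" for y
  have "((\<lambda>y. - (ln (\<rho> t y / c) * \<rho>_t t y) - (\<rho> t y - c) * velocity_x t y) has_integral G 1 - G 0) {0..1}"
    unfolding G_def using has_real_derivative_entropy_flux[OF assms]
    by (intro fundamental_theorem_of_calculus)
      (auto simp: has_real_derivative_iff_has_vector_derivative[symmetric] intro: has_field_derivative_at_within)
  moreover have "G 1 = G 0" using rho_periodic[OF t, of 0] velocity_periodic[OF t, of 0] by (simp add: G_def)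
  ultimately have "((\<lambda>y. - (ln (\<rho> t y / c) * \<rho>_t t y) - (\<rho> t y - c) * velocity_x t y) has_integral 0) {0..1}"
    by simp
  moreover have "\<rho> t x / c \<noteq> 0" for x using assms(1) rho_pos[OF t, of x] by simp
  then have "(\<lambda>x. ln (\<rho> t x / c) * \<rho>_t t x) integrable_on {0..1}"
    by (intro integrable_continuous_interval continuous_intros continuous_on_subset[OF rho_continuous[OF t]]
        continuous_on_subset[OF rho_t_continuous[OF t]]) auto
  ultimately have "((\<lambda>x. (- (ln (\<rho> t x / c) * \<rho>_t t x) - (\<rho> t x - c) * velocity_x t x)
      + ln (\<rho> t x / c) * \<rho>_t t x) has_integral 0 + integral {0..1} (\<lambda>x. ln (\<rho> t x / c) * \<rho>_t t x)) {0..1}"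
    by (rule has_integral_add[OF _ integrable_integral])
  then have "((\<lambda>x. - ((\<rho> t x - c) * velocity_x t x)) has_integral
      integral {0..1} (\<lambda>x. ln (\<rho> t x / c) * \<rho>_t t x)) {0..1}" by simp
  from has_integral_neg[OF this]
  have "((\<lambda>x. (\<rho> t x - c) * velocity_x t x) has_integral
      - integral {0..1} (\<lambda>x. ln (\<rho> t x / c) * \<rho>_t t x)) {0..1}" by simp
  then show "(\<lambda>x. (\<rho> t x - c) * velocity_x t x) integrable_on {0..1}"
    "integral {0..1} (\<lambda>x. ln (\<rho> t x / c) * \<rho>_t t x) = - integral {0..1} (\<lambda>x. (\<rho> t x - c) * velocity_x t x)"
    by (auto simp: integral_unique)
qed

lemma dissipation_integrand_bound:
  assumes t: "0 \<le> t" and lower: "\<And>y. rmin \<le> \<rho> t y" and upper: "\<And>y. \<rho> t y \<le> rmax"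
    and "0 < rmin"
    and coeff: "velocity_coefficients_bounded rmin rmax (mass t) amin amax bmin"
  shows "- ((\<rho> t x - mass t) * velocity_x t x)
    \<le> (amax * (\<rho> t (x + \<eta>) - mass t)\<^sup>2 - amin * (\<rho> t x - mass t)\<^sup>2) / (2 * \<eta>)
      - bmin * (\<rho> t x - mass t)\<^sup>2"
proof -
  note r = rho_continuous[OF t] rho_periodic[OF t]
  define A where "A = look_ahead \<eta> (\<rho> t) x"
  define B where "B = look_behind (\<rho> t) x"
  have "rmin \<le> A" "A \<le> min (mass t / \<eta>) rmax"
    using look_ahead_bounds[OF eta_pos eta_le_1 r lower upper] \<open>0 < rmin\<close>
    by (auto simp: A_def mass_def)
  moreover have "max (2 * mass t - rmax) rmin \<le> 2 * B" "2 * B \<le> min (2 * mass t - rmin) rmax"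
    using look_behind_bounds[OF r lower upper] by (auto simp: B_def mass_def)
  ultimately have c: "amin \<le> - f' A * g B" "- f' A * g B \<le> amax" "bmin \<le> f A * g' B"
    using coeff unfolding velocity_coefficients_bounded_def by blast+
  have "0 \<le> - f' A * g B"
    using look_ahead_behind_pos[OF t, of x] f'_neg[of A] g_ge_1[of B]
    by (intro mult_nonneg_nonneg) (auto simp: A_def B_def)
  have "- ((\<rho> t x - mass t) * velocity_x t x)
      = (- f' A * g B) * (\<rho> t x - mass t) * ((\<rho> t (x + \<eta>) - mass t) - (\<rho> t x - mass t)) / \<eta>
        - (f A * g' B) * (\<rho> t x - mass t)\<^sup>2"
    using eta_pos by (simp add: velocity_x_def A_def B_def power2_eq_square field_simps)
  also have "\<dots> \<le> (amax * (\<rho> t (x + \<eta>) - mass t)\<^sup>2 - amin * (\<rho> t x - mass t)\<^sup>2) / (2 * \<eta>)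
      - bmin * (\<rho> t x - mass t)\<^sup>2"
    by (rule mixed_term_bound[OF eta_pos \<open>0 \<le> - f' A * g B\<close> c])
  finally show ?thesis .
qed

lemma entropy_dissipation:
  assumes "0 < t" and lower: "\<And>y. rmin \<le> \<rho> t y" and upper: "\<And>y. \<rho> t y \<le> rmax"
    and "0 < rmin"
    and coeff: "velocity_coefficients_bounded rmin rmax (mass t) amin amax bmin"
  shows "integral {0..1} (\<lambda>x. ln (\<rho> t x / mass t) * \<rho>_t t x)
    \<le> - (bmin - (amax - amin) / (2 * \<eta>)) * integral {0..1} (\<lambda>x. (\<rho> t x - mass t)\<^sup>2)"
proof -
  have t: "0 \<le> t" using assms by simp
  have "0 < mass t" using mass_lower_bound[OF t lower] \<open>0 < rmin\<close> by simp
  define p where "p y = (\<rho> t y - mass t)\<^sup>2" for y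
  define q where "q y = (\<rho> t (y + \<eta>) - mass t)\<^sup>2" for y
  define K1 where "K1 = amax / (2 * \<eta>)"
  define K2 where "K2 = - amin / (2 * \<eta>) - bmin"
  have p_cont: "continuous_on UNIV p" unfolding p_def by (intro continuous_intros rho_continuous[OF t])
  have pq: "p integrable_on {0..1}" "q integrable_on {0..1}" unfolding p_def q_def
    by (auto intro!: integrable_continuous_interval continuous_intros
        continuous_on_subset[OF rho_continuous[OF t]]
        continuous_on_compose2[OF rho_continuous[OF t], of _ "\<lambda>y. y + \<eta>"])
  have "(\<lambda>x. - ((\<rho> t x - mass t) * velocity_x t x)) integrable_on {0..1}"
    using integrable_neg[OF integral_log_rho_t(1)[OF \<open>0 < mass t\<close> \<open>0 < t\<close>]] by simp
  moreover have "(\<lambda>x. K1 * q x + K2 * p x) integrable_on {0..1}"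
    using pq by (intro integrable_add integrable_on_mult_right)
  moreover have "- ((\<rho> t x - mass t) * velocity_x t x) \<le> K1 * q x + K2 * p x" for x
    using dissipation_integrand_bound[OF t lower upper \<open>0 < rmin\<close> coeff, of x]
    by (simp add: p_def q_def K1_def K2_def diff_divide_distrib algebra_simps)
  ultimately have "integral {0..1} (\<lambda>x. - ((\<rho> t x - mass t) * velocity_x t x))
      \<le> integral {0..1} (\<lambda>x. K1 * q x + K2 * p x)"
    by (rule integral_le)
  also have "\<dots> = K1 * integral {0..1} q + K2 * integral {0..1} p"
    using pq by (simp add: integral_add integrable_on_mult_right)
  also have "integral {0..1} q = integral {0..1} p"
    using periodic_integral_shift[OF p_cont, of \<eta>] rho_periodic[OF t] by (simp add: p_def q_def[abs_def])
  also have "K1 * integral {0..1} p + K2 * integral {0..1} p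
      = - (bmin - (amax - amin) / (2 * \<eta>)) * integral {0..1} p"
    by (simp add: K1_def K2_def algebra_simps diff_divide_distrib)
  finally show ?thesis
    using integral_log_rho_t(2)[OF \<open>0 < mass t\<close> \<open>0 < t\<close>] by (simp add: p_def[abs_def])
qed

lemma integral_sq_dev_entropy_bounds:
  assumes "0 \<le> s" "0 < rmin" "\<And>x. rmin \<le> \<rho> s x" "\<And>x. \<rho> s x \<le> rmax" "rmin \<le> c" "c \<le> rmax"
  shows "integral {0..1} (\<lambda>x. (\<rho> s x - c)\<^sup>2) \<le> 2 * rmax * entropy c s"
    "2 * rmin * entropy c s \<le> integral {0..1} (\<lambda>x. (\<rho> s x - c)\<^sup>2)"
proof -
  have "continuous_on {0..1} (\<rho> s)" using rho_continuous[OF assms(1)] by (rule continuous_on_subset) simp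
  from integral_rel_entropy_bounds[OF this _ assms(2,5,6)] assms(3,4)
  show "integral {0..1} (\<lambda>x. (\<rho> s x - c)\<^sup>2) \<le> 2 * rmax * entropy c s"
    "2 * rmin * entropy c s \<le> integral {0..1} (\<lambda>x. (\<rho> s x - c)\<^sup>2)"
    by (simp_all add: entropy_def)
qed

lemma entropy_decay:
  assumes "0 < rmin" and init: "\<And>x. rmin \<le> \<rho> 0 x" "\<And>x. \<rho> 0 x \<le> rmax"
    and coeff: "velocity_coefficients_bounded rmin rmax (mass 0) amin amax bmin"
    and "0 \<le> bmin - (amax - amin) / (2 * \<eta>)" and "0 \<le> t"
  shows "entropy (mass 0) t
    \<le> entropy (mass 0) 0 * exp (- (2 * (bmin - (amax - amin) / (2 * \<eta>)) * rmin) * t)"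
proof (rule exp_decay_from_differential_inequality[OF \<open>0 \<le> t\<close>])
  define \<kappa> where "\<kappa> = bmin - (amax - amin) / (2 * \<eta>)"
  have "0 \<le> \<kappa>" using assms(5) by (simp add: \<kappa>_def)
  have lower: "rmin \<le> \<rho> s x" and upper: "\<rho> s x \<le> rmax" if "0 \<le> s" for s x
    using rho_lower_bound[OF init(1) that] rho_upper_bound[OF init(2) that] by auto
  have mass0: "rmin \<le> mass 0" "mass 0 \<le> rmax"
    using mass_lower_bound[of 0 rmin] mass_upper_bound[of 0 rmax] init by auto
  then have "0 < mass 0" using \<open>0 < rmin\<close> by simp
  show "continuous_on {0..t} (entropy (mass 0))"
    by (rule DERIV_continuous_on, rule DERIV_subset[OF has_real_derivative_entropy[OF \<open>0 < mass 0\<close>]])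
      auto
  fix s assume "0 < s" "s < t"
  then have s: "0 \<le> s" "mass s = mass 0" using mass_const[of s] by auto
  have coeff_s: "velocity_coefficients_bounded rmin rmax (mass s) amin amax bmin"
    unfolding s(2) by (fact coeff)
  have "integral {0..1} (\<lambda>x. ln (\<rho> s x / mass 0) * \<rho>_t s x)
      \<le> - \<kappa> * integral {0..1} (\<lambda>x. (\<rho> s x - mass 0)\<^sup>2)"
    using entropy_dissipation[OF \<open>0 < s\<close> lower[OF s(1)] upper[OF s(1)] \<open>0 < rmin\<close> coeff_s]
    unfolding s(2) \<kappa>_def .
  also have "\<dots> \<le> - (2 * \<kappa> * rmin) * entropy (mass 0) s"
    using mult_left_mono[OF integral_sq_dev_entropy_bounds(2)[OF s(1) \<open>0 < rmin\<close>
          lower[OF s(1)] upper[OF s(1)] mass0] \<open>0 \<le> \<kappa>\<close>]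
    by (simp add: algebra_simps)
  finally have "integral {0..1} (\<lambda>x. ln (\<rho> s x / mass 0) * \<rho>_t s x)
      \<le> - (2 * \<kappa> * rmin) * entropy (mass 0) s" .
  moreover have "(entropy (mass 0) has_real_derivative
      integral {0..1} (\<lambda>x. ln (\<rho> s x / mass 0) * \<rho>_t s x)) (at s)"
    using has_real_derivative_entropy[OF \<open>0 < mass 0\<close> s(1)] at_within_atLeast_0[OF \<open>0 < s\<close>] by simp
  ultimately show "\<exists>D. (entropy (mass 0) has_real_derivative D) (at s)
      \<and> D \<le> - (2 * (bmin - (amax - amin) / (2 * \<eta>)) * rmin) * entropy (mass 0) s"
    unfolding \<kappa>_def by blast
qed

theorem L2_decay:
  assumes "0 < rmin" and init: "\<And>x. rmin \<le> \<rho> 0 x" "\<And>x. \<rho> 0 x \<le> rmax"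
    and coeff: "velocity_coefficients_bounded rmin rmax (mass 0) amin amax bmin"
    and "0 \<le> bmin - (amax - amin) / (2 * \<eta>)" and "0 \<le> t"
  shows "integral {0..1} (\<lambda>x. (\<rho> t x - mass 0)\<^sup>2)
    \<le> rmax / rmin * exp (- (2 * (bmin - (amax - amin) / (2 * \<eta>)) * rmin) * t)
      * integral {0..1} (\<lambda>x. (\<rho> 0 x - mass 0)\<^sup>2)"
proof -
  define E where "E = exp (- (2 * (bmin - (amax - amin) / (2 * \<eta>)) * rmin) * t)"
  have mass0: "rmin \<le> mass 0" "mass 0 \<le> rmax"
    using mass_lower_bound[of 0 rmin] mass_upper_bound[of 0 rmax] init by auto
  note sandwich = integral_sq_dev_entropy_bounds[OF _ \<open>0 < rmin\<close> rho_lower_bound[OF init(1)]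
      rho_upper_bound[OF init(2)] mass0]
  have "0 \<le> 2 * rmax" using \<open>0 < rmin\<close> mass0 by linarith
  have "integral {0..1} (\<lambda>x. (\<rho> t x - mass 0)\<^sup>2) \<le> 2 * rmax * entropy (mass 0) t"
    using sandwich(1) \<open>0 \<le> t\<close> by blast
  also have "\<dots> \<le> 2 * rmax * (entropy (mass 0) 0 * E)"
    by (rule mult_left_mono[OF entropy_decay[OF assms, folded E_def] \<open>0 \<le> 2 * rmax\<close>])
  also have "\<dots> \<le> 2 * rmax * (integral {0..1} (\<lambda>x. (\<rho> 0 x - mass 0)\<^sup>2) / (2 * rmin) * E)"
    using sandwich(2)[of 0] \<open>0 < rmin\<close> \<open>0 \<le> 2 * rmax\<close>
    by (intro mult_left_mono mult_right_mono) (simp_all add: E_def field_simps)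
  also have "\<dots> = rmax / rmin * E * integral {0..1} (\<lambda>x. (\<rho> 0 x - mass 0)\<^sup>2)"
    using \<open>0 < rmin\<close> by (simp add: field_simps)
  finally show ?thesis by (simp add: E_def)
qed

end

context traffic_model
begin

lemma solution_imp_traffic_solution:
  assumes "is_solution \<eta> f g \<rho>0 \<rho>"
  obtains \<rho>_t \<rho>_x where "traffic_solution \<eta> f f' g g' \<rho> \<rho>_t \<rho>_x"
proof -
  have C1: "C1_halfplane \<rho>" using assms by (simp add: is_solution_def)
  obtain \<rho>_t \<rho>_x where cont: "continuous_on ({0..} \<times> UNIV) (\<lambda>(t, x). \<rho> t x)"
    "continuous_on ({0..} \<times> UNIV) (\<lambda>(t, x). \<rho>_t t x)"
    and partial_t: "\<And>t x. 0 \<le> t \<Longrightarrow> ((\<lambda>s. \<rho> s x) has_real_derivative \<rho>_t t x) (at t within {0..})"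
    and partial_x: "\<And>t x. 0 \<le> t \<Longrightarrow> (\<rho> t has_real_derivative \<rho>_x t x) (at x)"
    using C1_halfplane_partials[OF C1] by blast
  have flux: "\<forall>t\<ge>0. \<forall>x. \<exists>D. ((\<lambda>s. \<rho> s x) has_real_derivative D) (at t within {0..}) \<and>
      ((\<lambda>y. \<rho> t y * velocity \<eta> f g \<rho> t y) has_real_derivative - D) (at x)"
    and per: "\<forall>t\<ge>0. W2inf (\<rho> t) \<and> Per (\<rho> t)"
    using assms unfolding is_solution_def by simp_all
  show ?thesis
  proof (rule that[of \<rho>_t \<rho>_x], intro traffic_solution.intro traffic_solution_axioms.intro traffic_model_axioms)
    show "0 < \<rho> t x" "\<rho> t (x + 1) = \<rho> t x" if "0 \<le> t" for t x
      using per[rule_format, OF that] by (simp_all add: Per_def)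
    show "((\<lambda>y. \<rho> t y * velocity \<eta> f g \<rho> t y) has_real_derivative - \<rho>_t t x) (at x)"
      if t_pos: "0 < t" for t x
    proof -
      obtain D where "((\<lambda>s. \<rho> s x) has_real_derivative D) (at t within {0..})"
        and flux_x: "((\<lambda>y. \<rho> t y * velocity \<eta> f g \<rho> t y) has_real_derivative - D) (at x)"
        using flux[rule_format, of t x] t_pos by auto
      then have "((\<lambda>s. \<rho> s x) has_real_derivative D) (at t)" using at_within_atLeast_0[OF t_pos] by simp
      moreover have "((\<lambda>s. \<rho> s x) has_real_derivative \<rho>_t t x) (at t)"
        using partial_t[of t x] t_pos at_within_atLeast_0[OF t_pos] by simp
      ultimately have "D = \<rho>_t t x" by (rule DERIV_unique)
      with flux_x show ?thesis by simp
    qed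
    show "continuous_on ({0..} \<times> UNIV) (\<lambda>(t, x). \<rho> t x)"
      "continuous_on ({0..} \<times> UNIV) (\<lambda>(t, x). \<rho>_t t x)" by (fact cont)+
    show "((\<lambda>s. \<rho> s x) has_real_derivative \<rho>_t t x) (at t within {0..})"
      "(\<rho> t has_real_derivative \<rho>_x t x) (at x)" if "0 \<le> t" for t x
      using that by (fact partial_t, fact partial_x)
  qed
qed

lemma is_solution_L2_decay:
  assumes sol: "is_solution \<eta> f g \<rho>0 \<rho>" and "Per \<rho>0"
    and coeff: "velocity_coefficients_bounded (Inf (\<rho>0 ` {0..1})) (Sup (\<rho>0 ` {0..1})) (integral {0..1} \<rho>0)
      amin amax bmin"
    and "0 \<le> bmin - (amax - amin) / (2 * \<eta>)" and "0 \<le> t"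
  shows "integral {0..1} (\<lambda>x. (\<rho> t x - integral {0..1} \<rho>0)\<^sup>2)
    \<le> Sup (\<rho>0 ` {0..1}) / Inf (\<rho>0 ` {0..1})
      * exp (- (2 * (bmin - (amax - amin) / (2 * \<eta>)) * Inf (\<rho>0 ` {0..1})) * t)
      * integral {0..1} (\<lambda>x. (\<rho>0 x - integral {0..1} \<rho>0)\<^sup>2)"
proof -
  from sol obtain \<rho>_t \<rho>_x where "traffic_solution \<eta> f f' g g' \<rho> \<rho>_t \<rho>_x"
    by (rule solution_imp_traffic_solution)
  then interpret traffic_solution \<eta> f f' g g' \<rho> \<rho>_t \<rho>_x .
  have "\<rho> 0 = \<rho>0" using sol by (simp add: is_solution_def)
  then have "mass 0 = integral {0..1} \<rho>0" by (simp add: mass_def)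
  from L2_decay[OF Per_bounds(1)[OF \<open>Per \<rho>0\<close>] _ _ coeff[folded this] assms(4,5)]
  show ?thesis using Per_bounds(2,3)[OF \<open>Per \<rho>0\<close>] \<open>\<rho> 0 = \<rho>0\<close> \<open>mass 0 = integral {0..1} \<rho>0\<close>
    by simp
qed

end

theorem theorem3p2:
  fixes \<eta> M :: real and f f1 f2 f3 g g1 g2 g3 \<rho>0 :: "real \<Rightarrow> real"
  assumes eta: "0 < \<eta>" "\<eta> \<le> 1"
    and f_C3: "C3_nonneg f f1 f2 f3" and g_C3: "C3_nonneg g g1 g2 g3"
    and f_dec: "\<forall>r\<ge>0. f1 r < 0" and g_inc: "\<forall>r\<ge>0. g1 r > 0"
    and f_pos: "\<forall>r\<ge>0. f r > 0" and g_ge1: "\<forall>r\<ge>0. g r \<ge> 1"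
    and M: "M \<ge> 0"
    and bound: "\<exists>Mf Mg. Mf + Mg \<le> M \<and>
        (\<forall>r\<ge>0. \<bar>f r\<bar> + \<bar>f1 r\<bar> + \<bar>f2 r\<bar> + \<bar>f3 r\<bar> \<le> Mf) \<and>
        (\<forall>r\<ge>0. \<bar>g r\<bar> + \<bar>g1 r\<bar> + \<bar>g2 r\<bar> + \<bar>g3 r\<bar> \<le> Mg)"
    and init: "W2inf \<rho>0" "Per \<rho>0"
    and cond:
      "let rs = integral {0..1} \<rho>0;
           rmin = Inf (\<rho>0 ` {0..1});
           rmax = Sup (\<rho>0 ` {0..1});
           Fmax = Sup ((\<lambda>s. \<bar>f1 s\<bar>) ` {rmin .. min (rs / \<eta>) rmax});
           Fmin = Inf ((\<lambda>s. \<bar>f1 s\<bar>) ` {rmin .. min (rs / \<eta>) rmax});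
           fmin = f (min (rs / \<eta>) rmax);
           gmax = g (min (2 * rs - rmin) rmax / 2);
           gmin = g (max (2 * rs - rmax) rmin / 2);
           Gmin = Inf (g1 ` {s. max (2 * rs - rmax) rmin \<le> 2 * s \<and> 2 * s \<le> min (2 * rs - rmin) rmax})
       in Fmax * gmax - Fmin * gmin < 2 * \<eta> * fmin * Gmin"
  shows "\<exists>c>0. \<forall>\<rho>. is_solution \<eta> f g \<rho>0 \<rho> \<longrightarrow>
           (\<forall>t\<ge>0. integral {0..1} (\<lambda>x. (\<rho> t x - integral {0..1} \<rho>0)\<^sup>2)
              \<le> Sup (\<rho>0 ` {0..1}) / Inf (\<rho>0 ` {0..1}) * exp (- c * t)
                 * integral {0..1} (\<lambda>x. (\<rho>0 x - integral {0..1} \<rho>0)\<^sup>2))"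
proof -
  interpret traffic_model \<eta> f f1 g g1
    using eta f_C3 g_C3 f_dec g_inc f_pos g_ge1 by unfold_locales (auto simp: C3_nonneg_def)
  define rs where "rs = integral {0..1} \<rho>0"
  define rmin where "rmin = Inf (\<rho>0 ` {0..1})"
  define rmax where "rmax = Sup (\<rho>0 ` {0..1})"
  define Y where "Y = {rmin .. min (rs / \<eta>) rmax}"
  define amin where "amin = Inf ((\<lambda>s. \<bar>f1 s\<bar>) ` Y) * g (max (2 * rs - rmax) rmin / 2)"
  define amax where "amax = Sup ((\<lambda>s. \<bar>f1 s\<bar>) ` Y) * g (min (2 * rs - rmin) rmax / 2)"
  define bmin where "bmin = f (min (rs / \<eta>) rmax)
    * Inf (g1 ` {s. max (2 * rs - rmax) rmin \<le> 2 * s \<and> 2 * s \<le> min (2 * rs - rmin) rmax})"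
  define \<kappa> where "\<kappa> = bmin - (amax - amin) / (2 * \<eta>)"
  have "amax - amin < 2 * \<eta> * bmin"
    using cond unfolding Let_def amin_def amax_def bmin_def Y_def rs_def rmin_def rmax_def
    by (simp only: mult.assoc)
  then have "0 < \<kappa>" using eta by (simp add: \<kappa>_def field_simps)
  have "0 < rmin" using Per_bounds(1)[OF init(2)] by (simp add: rmin_def)
  obtain Mf where Mf: "\<forall>r\<ge>0. \<bar>f r\<bar> + \<bar>f1 r\<bar> + \<bar>f2 r\<bar> + \<bar>f3 r\<bar> \<le> Mf" using bound by blast
  have "\<bar>f1 s\<bar> \<le> Mf" if "0 \<le> s" for s
    using that Mf abs_ge_zero[of "f s"] abs_ge_zero[of "f2 s"] abs_ge_zero[of "f3 s"] by fastforce
  then have "velocity_coefficients_bounded rmin rmax rs amin amax bmin"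
    unfolding amin_def amax_def bmin_def Y_def using \<open>0 < rmin\<close>
    by (intro velocity_coefficients_bounded_by_extrema bdd_aboveI[of _ Mf]) auto
  note decay = is_solution_L2_decay[OF _ init(2) this[unfolded rs_def rmin_def rmax_def]
      less_imp_le[OF \<open>0 < \<kappa>\<close>, unfolded \<kappa>_def]]
  show ?thesis
  proof (intro exI[of _ "2 * \<kappa> * rmin"] conjI allI impI)
    show "0 < 2 * \<kappa> * rmin" using \<open>0 < \<kappa>\<close> \<open>0 < rmin\<close> by simp
  qed (use decay in \<open>simp add: \<kappa>_def rmin_def\<close>)
qed

end
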